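(* Every maximal geodesic of $\Sigma$ is the image, under a horizontal translation $(x,y)\mapsto(x+c,y)$, possibly composed with the reflection $(x,y)\mapsto(-x,y)$, of one of the following curves, for some $a>0$: (i) the $y$-axis $\{x=0\}$; (ii) (geodesic with horizontal tangent at $(0,a)$) the curve $\{(x,y):0<y\le a,\ x=\pm\sqrt{\tfrac{3+\sinh^2a}{3}}\arccos\big(\tfrac{\cosh y}{\cosh a}\big)\}$ (both signs together), which satisfies $\frac{dx}{dy}=\pm\frac{\sqrt{3+\sinh^2 a}\,\sinh y}{\sqrt3\sqrt{\sinh^2a-\sinh^2y}}$; (iii) (slope $\sqrt3/\sinh a$ at $(0,a)$) the curve $x=\frac1{\sqrt3}(\cosh y-\cosh a)$, $y\in(0,\infty)$; (iv) (slope $m>\sqrt3/\sinh a$ at $(0,a)$) the curve $x=F(y)-F(a)$, $y\in(0,\infty)$, where $$F(y)=\frac{\sqrt{3+\sinh^2a}}{\sqrt{m^2\sinh^2a-3}}\log\Big\{(m^2\sinh^2a-3)\cosh y+\sqrt{m^2\sinh^2a-3}\,\sqrt{(m^2\sinh^2a-3)\cosh^2y+3\cosh^2a+2m^2\sinh^2a}\Big\}.$$ Moreover, a geodesic through $(0,a)$ with slope $m$, $0\le m<\sqrt3/\sinh a$, has a horizontal tangent at some point and is a horizontal translate of a geodesic of type (ii).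
   Context: $\Sigma=\mathbb{R}\times(0,\infty)$ with metric $ds^2=P(y)(dx^2+dy^2)$, $P(y)=\frac{e^{4y}+10e^{2y}+1}{4(e^{2y}-1)^2}$ (note $P(y)=\frac14+\frac{3}{4\sinh^2y}$). Geodesics are considered as unparametrized curves. *)

theory Defs
  imports "HOL-Analysis.Analysis"
begin

text \<open>Conformal factor of the metric ds^2 = P(y)(dx^2+dy^2) on Sigma = R x (0,inf).\<close>
definition P :: "real \<Rightarrow> real" where
  "P y = (exp (4*y) + 10 * exp (2*y) + 1) / (4 * (exp (2*y) - 1)^2)"

text \<open>With phi = (1/2) ln P the Christoffel symbols give
  x'' + (P'/P) x' y' = 0 and y'' + (P'/(2P)) (y'^2 - x'^2) = 0.\<close>
definition geodesic_on :: "real set \<Rightarrow> (real \<Rightarrow> real) \<Rightarrow> (real \<Rightarrow> real) \<Rightarrow> bool" where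
  "geodesic_on I x y \<longleftrightarrow> open I \<and> is_interval I \<and> I \<noteq> {} \<and>
     (\<forall>t\<in>I. y t > 0 \<and>
        x differentiable (at t) \<and> y differentiable (at t) \<and>
        (deriv x has_real_derivative
           (- (deriv P (y t) / P (y t)) * deriv x t * deriv y t)) (at t) \<and>
        (deriv y has_real_derivative
           ((deriv P (y t) / (2 * P (y t))) * ((deriv x t)^2 - (deriv y t)^2))) (at t) \<and>
        (deriv x t, deriv y t) \<noteq> (0, 0))"

definition maximal_geodesic :: "real set \<Rightarrow> (real \<Rightarrow> real) \<Rightarrow> (real \<Rightarrow> real) \<Rightarrow> bool" where
  "maximal_geodesic I x y \<longleftrightarrow> geodesic_on I x y \<and>
     (\<forall>J x2 y2. geodesic_on J x2 y2 \<and> I \<subseteq> J \<and> (\<forall>t\<in>I. x2 t = x t \<and> y2 t = y t) \<longrightarrow> J = I)"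

definition geo_trace :: "real set \<Rightarrow> (real \<Rightarrow> real) \<Rightarrow> (real \<Rightarrow> real) \<Rightarrow> (real \<times> real) set" where
  "geo_trace I x y = (\<lambda>t. (x t, y t)) ` I"

definition hmove :: "real \<Rightarrow> real \<Rightarrow> real \<times> real \<Rightarrow> real \<times> real" where
  "hmove e c = (\<lambda>(u, v). (e * u + c, v))"

definition curve_i :: "(real \<times> real) set" where
  "curve_i = {(u, v). u = 0 \<and> v > 0}"

definition curve_ii :: "real \<Rightarrow> (real \<times> real) set" where
  "curve_ii a = {(u, v). 0 < v \<and> v \<le> a \<and>
     (u = sqrt ((3 + (sinh a)^2) / 3) * arccos (cosh v / cosh a) \<or>
      u = - sqrt ((3 + (sinh a)^2) / 3) * arccos (cosh v / cosh a))}"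

definition curve_iii :: "real \<Rightarrow> (real \<times> real) set" where
  "curve_iii a = {(u, v). 0 < v \<and> u = (cosh v - cosh a) / sqrt 3}"

definition F4 :: "real \<Rightarrow> real \<Rightarrow> real \<Rightarrow> real" where
  "F4 a m y = sqrt (3 + (sinh a)^2) / sqrt (m^2 * (sinh a)^2 - 3) *
     ln ((m^2 * (sinh a)^2 - 3) * cosh y
         + sqrt (m^2 * (sinh a)^2 - 3) *
           sqrt ((m^2 * (sinh a)^2 - 3) * (cosh y)^2 + 3 * (cosh a)^2 + 2 * m^2 * (sinh a)^2))"

definition curve_iv :: "real \<Rightarrow> real \<Rightarrow> (real \<times> real) set" where
  "curve_iv a m = {(u, v). 0 < v \<and> u = F4 a m v - F4 a m a}"

end

(* Geodesics have two first integrals: Clairaut's constant C = P(y) x' and the energy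
   E = P(y) (x'^2 + y'^2).  Since P > 1/4, the sign of E - 4 C^2 decides the shape.

   If E >= 4 C^2, then (P(y) y')^2 = E P(y) - C^2 never vanishes, so y is strictly monotone and
   the geodesic is a graph x = c +- G(y) with G' = C / sqrt (E P - C^2); the antiderivative is
   constant (C = 0, the vertical line), cosh y / sqrt 3 (E = 4 C^2) or the logarithm F
   (E > 4 C^2).  If E < 4 C^2, put kappa^2 = 4 C^2 / (4 C^2 - E): then cosh y and
   kappa sinh(y) P(y) y' / C rotate uniformly in the angle x / kappa, which gives the arch
   cosh y = cosh a cos ((x - c) / kappa) of type (ii).

   In every case the reduced first-order equation for the curve parameter can be solved on the
   whole curve, producing a geodesic through all of it; by maximality this is the given one.
   A slope below sqrt 3 / sinh a at height a means exactly E < 4 C^2. *)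

theory Submission
  imports Defs
begin

section \<open>Calculus on real intervals\<close>

lemma is_interval_atLeastAtMost_subset:
  fixes D :: "real set"
  shows "is_interval D \<Longrightarrow> a \<in> D \<Longrightarrow> b \<in> D \<Longrightarrow> {a..b} \<subseteq> D"
  unfolding is_interval_1 by (meson atLeastAtMost_iff subsetI)

lemma open_real_interior_points:
  fixes D :: "real set"
  assumes "open D" "v \<in> D"
  obtains a b where "a \<in> D" "b \<in> D" "a < v" "v < b"
proof -
  obtain e where "e > 0" "ball v e \<subseteq> D" using assms openE by blast
  then have "v - e/2 \<in> D" "v + e/2 \<in> D" by (auto simp: dist_real_def subset_iff)
  then show ?thesis using that \<open>e > 0\<close> by auto
qed

lemma exists_antiderivative:
  fixes f :: "real \<Rightarrow> real"
  assumes D: "open D" "is_interval D" and f: "continuous_on D f"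
  obtains F where "\<And>v. v \<in> D \<Longrightarrow> (F has_real_derivative f v) (at v)"
proof (cases "D = {}")
  case False
  then obtain c where c: "c \<in> D" by blast
  define F where "F u = (LBINT s=ereal c..ereal u. f s)" for u
  have "(F has_real_derivative f v) (at v)" if v: "v \<in> D" for v
  proof -
    obtain a1 b1 where 1: "a1 \<in> D" "b1 \<in> D" "a1 < v" "v < b1"
      using open_real_interior_points[OF D(1) v] .
    define a where "a = min a1 c"
    define b where "b = max b1 c"
    have sub: "{a..b} \<subseteq> D"
      by (rule is_interval_atLeastAtMost_subset[OF D(2)]) (use 1 c in \<open>simp_all add: a_def b_def min_def max_def\<close>)
    have le: "a \<le> c" "c \<le> b" "a < v" "v < b" using 1 by (auto simp: a_def b_def)
    then have "(F has_vector_derivative f v) (at v within {a..b})"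
      unfolding F_def using interval_integral_FTC2[OF le(1,2) continuous_on_subset[OF f sub]] by simp
    moreover have "at v within {a..b} = at v"
      by (rule at_within_interior) (use le in simp)
    ultimately show ?thesis by (simp add: has_real_derivative_iff_has_vector_derivative)
  qed
  then show ?thesis using that by blast
qed (use that in blast)

lemma continuous_nonzero_sign:
  fixes f :: "real \<Rightarrow> real"
  assumes "connected S" "continuous_on S f" "0 \<notin> f ` S"
  obtains \<sigma> where "\<sigma> \<in> {1, -1}" "\<And>t. t \<in> S \<Longrightarrow> \<sigma> * f t > 0"
proof -
  have iv: "is_interval (f ` S)"
    using assms(1,2) connected_continuous_image is_interval_connected_1 by blast
  have "(\<forall>t\<in>S. f t > 0) \<or> (\<forall>t\<in>S. f t < 0)"
  proof (rule ccontr)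
    assume "\<not> ?thesis"
    then obtain t1 t2 where "t1 \<in> S" "t2 \<in> S" "f t1 \<le> 0" "0 \<le> f t2" by (auto simp: not_less)
    then have "0 \<in> f ` S" using iv[unfolded is_interval_1] by (meson image_eqI)
    then show False using assms(3) by blast
  qed
  then show ?thesis
  proof
    assume "\<forall>t\<in>S. f t > 0" then show ?thesis using that[of 1] by simp
  next
    assume "\<forall>t\<in>S. f t < 0" then show ?thesis using that[of "-1"] by simp
  qed
qed

lemma continuous_on_connected_abs_less:
  fixes f :: "real \<Rightarrow> real"
  assumes "connected S" "continuous_on S f" "t0 \<in> S" "t \<in> S" "\<bar>f t0\<bar> < b"
    and "\<And>s. s \<in> S \<Longrightarrow> \<bar>f s\<bar> \<noteq> b"
  shows "\<bar>f t\<bar> < b"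
proof (rule ccontr)
  assume "\<not> \<bar>f t\<bar> < b"
  then have "b \<in> {f t0..f t} \<or> - b \<in> {f t..f t0}" using assms(5) by auto
  moreover have "is_interval (f ` S)"
    using connected_continuous_image is_interval_connected_1 assms(1,2) by blast
  then have "{f t0..f t} \<subseteq> f ` S" "{f t..f t0} \<subseteq> f ` S"
    using assms(3,4) by (simp_all add: is_interval_atLeastAtMost_subset)
  ultimately obtain s where "s \<in> S" "\<bar>f s\<bar> = b" using assms(5) by force
  then show False using assms(6) by blast
qed

lemma deriv_zero_at_max:
  fixes f :: "real \<Rightarrow> real"
  assumes "open I" "t1 \<in> I" "(f has_real_derivative f') (at t1)" "\<And>t. t \<in> I \<Longrightarrow> f t \<le> f t1"
  shows "f' = 0"
proof -
  obtain e where "e > 0" "ball t1 e \<subseteq> I" using assms(1,2) openE by blast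
  with assms(4) have "\<forall>t. \<bar>t1 - t\<bar> < e \<longrightarrow> f t \<le> f t1" by (auto simp: dist_real_def subset_iff)
  with DERIV_local_max[OF assms(3) \<open>e > 0\<close>] show ?thesis by blast
qed

lemma has_real_derivative_inverse_increasing:
  fixes T :: "real \<Rightarrow> real"
  assumes D: "open D" "is_interval D"
    and T: "\<And>v. v \<in> D \<Longrightarrow> (T has_real_derivative T' v) (at v)" "\<And>v. v \<in> D \<Longrightarrow> T' v > 0"
  shows "inj_on T D" "open (T ` D)"
    "\<And>s. s \<in> T ` D \<Longrightarrow> (inv_into D T has_real_derivative inverse (T' (inv_into D T s))) (at s)"
proof -
  have mono: "T v < T w" if "v \<in> D" "w \<in> D" "v < w" for v w
  proof (rule DERIV_pos_imp_increasing[OF that(3)])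
    fix z assume "v \<le> z" "z \<le> w"
    then have "z \<in> D" using is_interval_atLeastAtMost_subset[OF D(2) that(1,2)] by auto
    then show "\<exists>l. (T has_real_derivative l) (at z) \<and> 0 < l" using T by blast
  qed
  show inj: "inj_on T D"
    by (rule inj_onI) (metis linorder_neqE_linordered_idom mono less_irrefl)
  have cont: "isCont T v" if "v \<in> D" for v using T(1)[OF that] DERIV_isCont by blast
  then have "connected (T ` D)"
    using D(2) connected_continuous_image continuous_at_imp_continuous_on is_interval_connected_1 by blast
  then have Ioo: "{T a<..<T b} \<subseteq> T ` D" if "a \<in> D" "b \<in> D" for a b
    using connected_contains_Ioo that by blast
  have around: "\<exists>a b. a \<in> D \<and> b \<in> D \<and> T a < T v \<and> T v < T b" if "v \<in> D" for v
    using open_real_interior_points[OF D(1) that] mono that by metis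
  show "open (T ` D)"
  proof (subst open_subopen, intro ballI)
    fix s assume "s \<in> T ` D"
    then obtain a b where "a \<in> D" "b \<in> D" "T a < s" "s < T b" using around by blast
    then show "\<exists>S. open S \<and> s \<in> S \<and> S \<subseteq> T ` D"
      using Ioo by (intro exI[of _ "{T a<..<T b}"]) auto
  qed
  fix s assume "s \<in> T ` D"
  then obtain v where v: "v \<in> D" "s = T v" by blast
  have gT: "inv_into D T (T z) = z" if "z \<in> D" for z using inj that by simp
  obtain a b where ab: "a \<in> D" "b \<in> D" "a < v" "v < b" using open_real_interior_points[OF D(1) v(1)] .
  have sub: "{a..b} \<subseteq> D" using is_interval_atLeastAtMost_subset[OF D(2) ab(1,2)] .
  show "(inv_into D T has_real_derivative inverse (T' (inv_into D T s))) (at s)"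
  proof (rule DERIV_inverse_function[where a="T a" and b="T b"])
    show "(T has_real_derivative T' (inv_into D T s)) (at (inv_into D T s))" "T' (inv_into D T s) \<noteq> 0"
      using T(1)[OF v(1)] T(2)[OF v(1)] gT[OF v(1)] v(2) by auto
    show "T a < s" "s < T b" using mono ab v by auto
    show "T (inv_into D T y) = y" if "T a < y" "y < T b" for y
      using Ioo[OF ab(1,2)] that by (simp add: f_inv_into_f subset_iff)
    show "isCont (inv_into D T) s"
      unfolding v(2) by (rule isCont_inverse_function2[OF ab(3,4)]) (use sub gT cont in auto)
  qed
qed

lemma polar_form_unique:
  fixes U V \<phi> :: "real \<Rightarrow> real"
  assumes I: "convex I" "t0 \<in> I" "t \<in> I"
    and \<phi>: "\<And>t. t \<in> I \<Longrightarrow> (\<phi> has_real_derivative \<phi>' t) (at t)"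
    and U: "\<And>t. t \<in> I \<Longrightarrow> (U has_real_derivative V t * \<phi>' t) (at t)"
    and V: "\<And>t. t \<in> I \<Longrightarrow> (V has_real_derivative - U t * \<phi>' t) (at t)"
    and init: "U t0 = r * cos (\<phi> t0)" "V t0 = - r * sin (\<phi> t0)"
  shows "U t = r * cos (\<phi> t) \<and> V t = - r * sin (\<phi> t)"
proof -
  define f where "f t = U t - r * cos (\<phi> t)" for t
  define g where "g t = V t + r * sin (\<phi> t)" for t
  have "((\<lambda>t. f t * f t + g t * g t) has_real_derivative 0) (at t within I)" if t: "t \<in> I" for t
  proof -
    have "(f has_real_derivative g t * \<phi>' t) (at t)"
      unfolding f_def[abs_def] using DERIV_diff[OF U[OF t] DERIV_cmult[OF DERIV_fun_cos[OF \<phi>[OF t]]]]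
      by (simp add: f_def g_def algebra_simps)
    moreover have "(g has_real_derivative - f t * \<phi>' t) (at t)"
      unfolding g_def[abs_def] using DERIV_add[OF V[OF t] DERIV_cmult[OF DERIV_fun_sin[OF \<phi>[OF t]]]]
      by (simp add: f_def g_def algebra_simps)
    ultimately have "((\<lambda>t. f t * f t + g t * g t) has_real_derivative
        g t * \<phi>' t * f t + g t * \<phi>' t * f t + (- f t * \<phi>' t * g t + - f t * \<phi>' t * g t)) (at t)"
      by (intro DERIV_add DERIV_mult)
    then show ?thesis by (simp add: has_field_derivative_at_within)
  qed
  from has_field_derivative_zero_constant[OF I(1) this]
  obtain k where k: "\<And>t. t \<in> I \<Longrightarrow> f t * f t + g t * g t = k" by blast
  moreover have "f t0 = 0" "g t0 = 0" using init by (simp_all add: f_def g_def)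
  ultimately have "f t * f t + g t * g t = 0" using k[OF I(2)] k[OF I(3)] by simp
  then show ?thesis by (simp add: f_def g_def)
qed

lemma one_less_cosh: "(a::real) \<noteq> 0 \<Longrightarrow> 1 < cosh a"
  by (metis cosh_real_ge_1 cosh_real_one_iff order_le_less)

section \<open>Autonomous scalar ODEs\<close>

lemma affine_vimage_open_interval:
  fixes S :: "real set"
  assumes \<sigma>: "\<sigma> * \<sigma> = 1" and S: "open S" "connected S"
  shows "open ((\<lambda>t. \<sigma> * t - d) -` S)" "is_interval ((\<lambda>t. \<sigma> * t - d) -` S)"
proof -
  show "open ((\<lambda>t. \<sigma> * t - d) -` S)" by (intro open_vimage S continuous_intros)
  have "(\<lambda>t. \<sigma> * t - d) -` S = (\<lambda>s. \<sigma> * (s + d)) ` S"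
  proof (intro set_eqI iffI)
    fix t assume "t \<in> (\<lambda>t. \<sigma> * t - d) -` S"
    moreover have "t = \<sigma> * ((\<sigma> * t - d) + d)" using \<sigma> by (simp add: mult.assoc[symmetric])
    ultimately show "t \<in> (\<lambda>s. \<sigma> * (s + d)) ` S" by (intro image_eqI[of _ _ "\<sigma> * t - d"]) auto
  next
    fix t assume "t \<in> (\<lambda>s. \<sigma> * (s + d)) ` S"
    then show "t \<in> (\<lambda>t. \<sigma> * t - d) -` S" using \<sigma> by (auto simp: mult.assoc[symmetric])
  qed
  moreover have "connected ((\<lambda>s. \<sigma> * (s + d)) ` S)"
    using S(2) by (rule connected_continuous_image[rotated]) (intro continuous_intros)
  ultimately show "is_interval ((\<lambda>t. \<sigma> * t - d) -` S)" by (simp add: is_interval_connected_1)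
qed

text \<open>\<open>T\<close> is a time function: along every solution of \<open>s' = w s\<close>, \<open>T (s t) = \<sigma> * t + const\<close>.\<close>
lemma exists_ode_time_function:
  fixes w :: "real \<Rightarrow> real"
  assumes D: "open D" "is_interval D" and w: "continuous_on D w" "0 \<notin> w ` D"
  obtains \<sigma> T where "\<sigma> \<in> {1, -1}" "\<And>s. s \<in> D \<Longrightarrow> (T has_real_derivative \<sigma> / w s) (at s)"
    "\<And>s. s \<in> D \<Longrightarrow> \<sigma> / w s > 0"
proof -
  obtain \<sigma> where \<sigma>: "\<sigma> \<in> {1, -1}" "\<And>s. s \<in> D \<Longrightarrow> \<sigma> * w s > 0"
    using continuous_nonzero_sign[OF D(2)[unfolded is_interval_connected_1] w] by blast
  have "continuous_on D (\<lambda>s. \<sigma> / w s)" using w by (intro continuous_intros) force+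
  with exists_antiderivative[OF D] obtain T where "\<And>s. s \<in> D \<Longrightarrow> (T has_real_derivative \<sigma> / w s) (at s)"
    by blast
  moreover have "\<sigma> / w s > 0" if "s \<in> D" for s
    using \<sigma>(1) \<sigma>(2)[OF that] by (auto simp: zero_less_divide_iff)
  ultimately show ?thesis using that \<sigma>(1) by blast
qed

lemma ode_solution_from_time_function:
  fixes w T :: "real \<Rightarrow> real" and d :: real
  assumes D: "open D" "is_interval D" and \<sigma>: "\<sigma> \<in> {1, -1}"
    and T: "\<And>s. s \<in> D \<Longrightarrow> (T has_real_derivative \<sigma> / w s) (at s)" "\<And>s. s \<in> D \<Longrightarrow> \<sigma> / w s > 0"
  defines "J \<equiv> (\<lambda>t. \<sigma> * t - d) -` (T ` D)" and "\<theta> \<equiv> \<lambda>t. inv_into D T (\<sigma> * t - d)"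
  shows "open J" "is_interval J" "\<theta> ` J = D" "\<And>t. t \<in> J \<Longrightarrow> (\<theta> has_real_derivative w (\<theta> t)) (at t)"
proof -
  have \<sigma>\<sigma>: "\<sigma> * \<sigma> = 1" using \<sigma> by auto
  note inv = has_real_derivative_inverse_increasing[OF D, of T "\<lambda>s. \<sigma> / w s"]
  have "continuous_on D T" using T(1) DERIV_isCont continuous_at_imp_continuous_on by blast
  then have "connected (T ` D)" using D(2) connected_continuous_image is_interval_connected_1 by blast
  then show "open J" "is_interval J"
    unfolding J_def using affine_vimage_open_interval[OF \<sigma>\<sigma>] inv(2) T by blast+
  show "\<theta> ` J = D"
  proof
    show "\<theta> ` J \<subseteq> D" by (auto simp: \<theta>_def J_def inv_into_into)
    show "D \<subseteq> \<theta> ` J"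
    proof
      fix s assume s: "s \<in> D"
      have "\<sigma> * (\<sigma> * (T s + d)) - d = T s" using \<sigma>\<sigma> by (simp add: mult.assoc[symmetric])
      then show "s \<in> \<theta> ` J"
        using s inv(1) T by (intro image_eqI[of _ _ "\<sigma> * (T s + d)"]) (auto simp: \<theta>_def J_def)
    qed
  qed
  fix t assume "t \<in> J"
  then have s: "\<sigma> * t - d \<in> T ` D" by (simp add: J_def)
  have lin: "((\<lambda>t. \<sigma> * t - d) has_real_derivative \<sigma>) (at t)"
    by (auto intro!: derivative_eq_intros)
  have "(\<theta> has_real_derivative inverse (\<sigma> / w (\<theta> t)) * \<sigma>) (at t)"
    using DERIV_chain2[OF inv(3)[OF T s] lin] unfolding \<theta>_def .
  moreover have "\<sigma> / w (\<theta> t) > 0" using s T(2) by (simp add: \<theta>_def inv_into_into)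
  ultimately show "(\<theta> has_real_derivative w (\<theta> t)) (at t)" using \<sigma> by auto
qed

lemma autonomous_ode_maximal_solution:
  fixes w \<theta> :: "real \<Rightarrow> real"
  assumes D: "open D" "is_interval D" and w: "continuous_on D w" "0 \<notin> w ` D"
    and I: "convex I" "I \<noteq> {}"
    and \<theta>: "\<And>t. t \<in> I \<Longrightarrow> \<theta> t \<in> D" "\<And>t. t \<in> I \<Longrightarrow> (\<theta> has_real_derivative w (\<theta> t)) (at t)"
  obtains J \<theta>' where "open J" "is_interval J" "I \<subseteq> J" "\<theta>' ` J = D" "\<And>t. t \<in> I \<Longrightarrow> \<theta>' t = \<theta> t"
    "\<And>t. t \<in> J \<Longrightarrow> (\<theta>' has_real_derivative w (\<theta>' t)) (at t)"
proof -
  obtain \<sigma> T where \<sigma>: "\<sigma> \<in> {1, -1}" and T: "\<And>s. s \<in> D \<Longrightarrow> (T has_real_derivative \<sigma> / w s) (at s)"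
    "\<And>s. s \<in> D \<Longrightarrow> \<sigma> / w s > 0"
    using exists_ode_time_function[OF D w] by blast
  have "\<exists>d. \<forall>t\<in>I. \<sigma> * t - T (\<theta> t) = d"
  proof (rule has_field_derivative_zero_constant[OF I(1)])
    fix t assume t: "t \<in> I"
    have "((\<lambda>t. \<sigma> * t - T (\<theta> t)) has_real_derivative \<sigma> * 1 - \<sigma> / w (\<theta> t) * w (\<theta> t)) (at t)"
      by (intro DERIV_diff DERIV_cmult DERIV_ident DERIV_chain2[OF T(1) \<theta>(2)] \<theta>(1) t)
    moreover have "w (\<theta> t) \<noteq> 0" using T(2)[OF \<theta>(1)[OF t]] by auto
    ultimately show "((\<lambda>t. \<sigma> * t - T (\<theta> t)) has_real_derivative 0) (at t within I)"
      by (simp add: has_field_derivative_at_within)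
  qed
  then obtain d where d: "\<And>t. t \<in> I \<Longrightarrow> T (\<theta> t) = \<sigma> * t - d"
    by (metis add_diff_cancel_left' diff_add_cancel)
  define J where "J = (\<lambda>t. \<sigma> * t - d) -` (T ` D)"
  define \<theta>' where "\<theta>' t = inv_into D T (\<sigma> * t - d)" for t
  have sol: "open J" "is_interval J" "\<theta>' ` J = D" "\<And>t. t \<in> J \<Longrightarrow> (\<theta>' has_real_derivative w (\<theta>' t)) (at t)"
    unfolding J_def \<theta>'_def[abs_def]
    by (rule ode_solution_from_time_function[OF D \<sigma>]; (rule T; assumption)?; assumption?)+
  have inj: "inj_on T D" using has_real_derivative_inverse_increasing(1)[OF D, of T "\<lambda>s. \<sigma> / w s"] T by blast
  show ?thesis
  proof (rule that[OF sol(1,2) _ sol(3) _ sol(4)])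
    show "I \<subseteq> J"
    proof
      fix t assume "t \<in> I"
      then have "\<sigma> * t - d = T (\<theta> t)" "\<theta> t \<in> D" using d \<theta>(1) by auto
      then show "t \<in> J" by (simp add: J_def)
    qed
    show "\<theta>' t = \<theta> t" if "t \<in> I" for t
      using d[OF that, symmetric] \<theta>(1)[OF that] inj by (simp add: \<theta>'_def)
  qed
qed

section \<open>The conformal factor\<close>

definition dP :: "real \<Rightarrow> real" where
  "dP v = - 3 * cosh v / (2 * sinh v ^ 3)"

lemma P_sinh:
  assumes "v > 0"
  shows "P v = 1/4 + 3 / (4 * sinh v ^ 2)"
proof -
  define u where "u = exp v"
  have u: "u > 1" using assms by (simp add: u_def)
  have ne: "u\<^sup>2 - 1 \<noteq> 0" using one_less_power[OF u, of 2] by simp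
  have "exp (4 * v) = u ^ 4" "exp (2 * v) = u\<^sup>2"
    unfolding u_def by (metis exp_of_nat_mult of_nat_numeral)+
  then have "P v = (u ^ 4 + 10 * u\<^sup>2 + 1) / (4 * (u\<^sup>2 - 1)\<^sup>2)"
    by (simp add: P_def)
  also have "\<dots> = 1/4 + 3 / (4 * ((u\<^sup>2 - 1)\<^sup>2 / (4 * u\<^sup>2)))"
    using ne u by (simp add: field_simps) (simp add: algebra_simps power2_eq_square power4_eq_xxxx)
  also have "(u\<^sup>2 - 1)\<^sup>2 / (4 * u\<^sup>2) = sinh v ^ 2"
    by (simp add: u_def sinh_def field_simps exp_minus power2_eq_square)
  finally show ?thesis .
qed

lemma sinh_sq_mult_P: "v > 0 \<Longrightarrow> 4 * sinh v ^ 2 * P v = sinh v ^ 2 + 3"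
  by (simp add: P_sinh field_simps)

lemma P_gt_quarter: "v > 0 \<Longrightarrow> P v > 1/4"
  by (simp add: P_sinh)

lemma P_pos: "v > 0 \<Longrightarrow> P v > 0"
  using P_gt_quarter[of v] by linarith

lemma sinh_mult_dP: "v > 0 \<Longrightarrow> sinh v * dP v = - 2 * cosh v * (P v - 1/4)"
  by (simp add: P_sinh dP_def field_simps power2_eq_square power3_eq_cube)

lemma has_real_derivative_P:
  assumes "v > 0"
  shows "(P has_real_derivative dP v) (at v)"
proof -
  have s: "sinh v \<noteq> 0" using assms by simp
  have "((\<lambda>v. 1/4 + 3 / (4 * sinh v ^ 2)) has_real_derivative
      - (3 * (4 * (2 * sinh v * cosh v))) / (4 * sinh v ^ 2)\<^sup>2) (at v)"
    by (rule derivative_eq_intros refl | use s in simp)+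
  also have "- (3 * (4 * (2 * sinh v * cosh v))) / (4 * sinh v ^ 2)\<^sup>2 = dP v"
    using s by (simp add: dP_def field_simps power2_eq_square power3_eq_cube)
  finally show ?thesis
    by (rule has_field_derivative_transform_within_open[of _ _ _ "{0<..}"]) (use assms P_sinh in auto)
qed

lemma deriv_P: "v > 0 \<Longrightarrow> deriv P v = dP v"
  using has_real_derivative_P DERIV_imp_deriv by blast

lemma continuous_on_P: "continuous_on {0<..} P"
  using has_real_derivative_P DERIV_isCont continuous_at_imp_continuous_on by (metis greaterThan_iff)

section \<open>Geodesics and their first integrals\<close>

lemma geodesic_onD:
  assumes "geodesic_on I x y" "t \<in> I"
  shows "y t > 0" "(x has_real_derivative deriv x t) (at t)"
    "(y has_real_derivative deriv y t) (at t)"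
    "(deriv x has_real_derivative - (dP (y t) / P (y t)) * deriv x t * deriv y t) (at t)"
    "(deriv y has_real_derivative dP (y t) / (2 * P (y t)) * ((deriv x t)\<^sup>2 - (deriv y t)\<^sup>2)) (at t)"
    "(deriv x t, deriv y t) \<noteq> (0, 0)"
  using assms unfolding geodesic_on_def
  by (auto simp: deriv_P DERIV_deriv_iff_real_differentiable)

lemma geodesic_on_interval:
  assumes "geodesic_on I x y"
  shows "open I" "convex I" "connected I" "I \<noteq> {}"
  using assms unfolding geodesic_on_def
  by (auto simp: is_interval_convex_1 convex_connected)

lemma geodesic_on_continuous:
  assumes "geodesic_on I x y"
  shows "continuous_on I x" "continuous_on I (deriv y)"
  using geodesic_onD[OF assms] DERIV_isCont continuous_at_imp_continuous_on by meson+

lemma geodesic_onI: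
  assumes "open J" "is_interval J" "J \<noteq> {}"
    and "\<And>t. t \<in> J \<Longrightarrow> y t > 0"
    and "\<And>t. t \<in> J \<Longrightarrow> (x has_real_derivative x' t) (at t)"
    and "\<And>t. t \<in> J \<Longrightarrow> (y has_real_derivative y' t) (at t)"
    and "\<And>t. t \<in> J \<Longrightarrow> (x' has_real_derivative - (dP (y t) / P (y t)) * x' t * y' t) (at t)"
    and "\<And>t. t \<in> J \<Longrightarrow> (y' has_real_derivative dP (y t) / (2 * P (y t)) * ((x' t)\<^sup>2 - (y' t)\<^sup>2)) (at t)"
    and "\<And>t. t \<in> J \<Longrightarrow> (x' t, y' t) \<noteq> (0, 0)"
  shows "geodesic_on J x y"
  unfolding geodesic_on_def
proof (intro conjI ballI assms(1-3))
  fix t assume t: "t \<in> J"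
  have dx: "deriv x t = x' t" and dy: "deriv y t = y' t" if "t \<in> J" for t
    using assms(5,6)[OF that] DERIV_imp_deriv by blast+
  show "y t > 0" "(deriv x t, deriv y t) \<noteq> (0, 0)" using assms(4,9) t dx dy by auto
  show "x differentiable at t" "y differentiable at t"
    using assms(5,6)[OF t] real_differentiable_def by blast+
  show "(deriv x has_real_derivative - (deriv P (y t) / P (y t)) * deriv x t * deriv y t) (at t)"
    using has_field_derivative_transform_within_open[of x' _ t J "deriv x"] assms(1,4,7) t dx dy
    by (simp add: deriv_P)
  show "(deriv y has_real_derivative deriv P (y t) / (2 * P (y t)) * ((deriv x t)\<^sup>2 - (deriv y t)\<^sup>2)) (at t)"
    using has_field_derivative_transform_within_open[of y' _ t J "deriv y"] assms(1,4,8) t dx dy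
    by (simp add: deriv_P)
qed

text \<open>\<open>C\<close> is Clairaut's integral, coming from the invariance of the metric under
  horizontal translations, and \<open>E\<close> is the energy.\<close>
definition geodesic_constants :: "real set \<Rightarrow> (real \<Rightarrow> real) \<Rightarrow> (real \<Rightarrow> real) \<Rightarrow> real \<Rightarrow> real \<Rightarrow> bool" where
  "geodesic_constants I x y C E \<longleftrightarrow>
     (\<forall>t\<in>I. P (y t) * deriv x t = C \<and> P (y t) * ((deriv x t)\<^sup>2 + (deriv y t)\<^sup>2) = E)"

lemma geodesic_constants_exist:
  assumes g: "geodesic_on I x y"
  obtains C E where "geodesic_constants I x y C E"
proof -
  note d = geodesic_onD[OF g]
  have "((\<lambda>t. P (y t) * deriv x t) has_real_derivative 0) (at t within I)"
    if t: "t \<in> I" for t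
  proof -
    have "((\<lambda>t. P (y t) * deriv x t) has_real_derivative
      dP (y t) * deriv y t * deriv x t + (- (dP (y t) / P (y t)) * deriv x t * deriv y t) * P (y t)) (at t)"
      using DERIV_mult[OF DERIV_chain2[OF has_real_derivative_P d(3)] d(4)] d(1) t by simp
    then show ?thesis
      using P_pos[OF d(1)[OF t]] by (simp add: field_simps has_field_derivative_at_within)
  qed
  then obtain C where C: "\<forall>t\<in>I. P (y t) * deriv x t = C"
    using has_field_derivative_zero_constant[OF geodesic_on_interval(2)[OF g]] by blast
  have "((\<lambda>t. P (y t) * ((deriv x t)\<^sup>2 + (deriv y t)\<^sup>2)) has_real_derivative 0) (at t within I)"
    if t: "t \<in> I" for t
  proof -
    let ?x' = "deriv x t" and ?y' = "deriv y t" and ?p = "P (y t)" and ?q = "dP (y t)"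
    have "((\<lambda>t. P (y t) * ((deriv x t)\<^sup>2 + (deriv y t)\<^sup>2)) has_real_derivative
      ?q * ?y' * (?x'\<^sup>2 + ?y'\<^sup>2) + ?p * (2 * ?x' * (- (?q / ?p) * ?x' * ?y')
        + 2 * ?y' * (?q / (2 * ?p) * (?x'\<^sup>2 - ?y'\<^sup>2)))) (at t)"
      by (rule derivative_eq_intros DERIV_chain2[OF has_real_derivative_P] d t refl
          | simp add: algebra_simps)+
    then show ?thesis
      using P_pos[OF d(1)[OF t]] by (simp add: field_simps power2_eq_square has_field_derivative_at_within)
  qed
  then obtain E where "\<forall>t\<in>I. P (y t) * ((deriv x t)\<^sup>2 + (deriv y t)\<^sup>2) = E"
    using has_field_derivative_zero_constant[OF geodesic_on_interval(2)[OF g]] by blast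
  with C show ?thesis using that unfolding geodesic_constants_def by blast
qed

lemma geodesic_constantsD:
  assumes g: "geodesic_on I x y" and CE: "geodesic_constants I x y C E" and t: "t \<in> I"
  shows "E > 0" "deriv x t = C / P (y t)" "(P (y t) * deriv y t)\<^sup>2 = E * P (y t) - C\<^sup>2"
proof -
  have p: "P (y t) > 0" using P_pos geodesic_onD(1)[OF g t] by blast
  have C: "P (y t) * deriv x t = C" and E: "P (y t) * ((deriv x t)\<^sup>2 + (deriv y t)\<^sup>2) = E"
    using CE t unfolding geodesic_constants_def by auto
  have "(deriv x t)\<^sup>2 + (deriv y t)\<^sup>2 > 0"
    using geodesic_onD(6)[OF g t] by (simp add: sum_power2_gt_zero_iff)
  then show "E > 0" using E p by (metis mult_pos_pos)
  show "deriv x t = C / P (y t)" using C p by (auto simp: field_simps)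
  show "(P (y t) * deriv y t)\<^sup>2 = E * P (y t) - C\<^sup>2"
    using C E by (auto simp: algebra_simps power2_eq_square)
qed

lemma maximal_geodesic_extension_eq:
  assumes "maximal_geodesic I x y" "geodesic_on J x' y'" "I \<subseteq> J"
    and "\<And>t. t \<in> I \<Longrightarrow> x' t = x t \<and> y' t = y t"
  shows "J = I"
  using assms unfolding maximal_geodesic_def by blast

text \<open>The horizontal geodesic equation follows from Clairaut's relation \<open>x' = C / P y\<close>,
  so along a curve traversed with speed \<open>w\<close> only the vertical one has to be checked.\<close>
lemma geodesic_on_reparametrization:
  assumes J: "open J" "is_interval J" "J \<noteq> {}"
    and \<theta>: "\<And>t. t \<in> J \<Longrightarrow> \<theta> t \<in> D" "\<And>t. t \<in> J \<Longrightarrow> (\<theta> has_real_derivative w (\<theta> t)) (at t)"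
    and Y: "\<And>s. s \<in> D \<Longrightarrow> Y s > 0" "\<And>s. s \<in> D \<Longrightarrow> (Y has_real_derivative Y' s) (at s)"
    and X: "\<And>s. s \<in> D \<Longrightarrow> (X has_real_derivative X' s) (at s)"
      "\<And>s. s \<in> D \<Longrightarrow> X' s * w s = C / P (Y s)"
    and V: "\<And>s. s \<in> D \<Longrightarrow> ((\<lambda>s. Y' s * w s) has_real_derivative V s) (at s)"
      "\<And>s. s \<in> D \<Longrightarrow> V s * w s = dP (Y s) / (2 * P (Y s)) * ((C / P (Y s))\<^sup>2 - (Y' s * w s)\<^sup>2)"
    and nonzero: "\<And>s. s \<in> D \<Longrightarrow> (C, Y' s * w s) \<noteq> (0, 0)"
  shows "geodesic_on J (\<lambda>t. X (\<theta> t)) (\<lambda>t. Y (\<theta> t))"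
proof (rule geodesic_onI[OF J, where x' = "\<lambda>t. C / P (Y (\<theta> t))" and y' = "\<lambda>t. Y' (\<theta> t) * w (\<theta> t)"])
  fix t assume t: "t \<in> J"
  note s = \<theta>(1)[OF t]
  have p: "P (Y (\<theta> t)) > 0" using P_pos Y(1)[OF s] by blast
  show "Y (\<theta> t) > 0" using Y(1)[OF s] .
  show "((\<lambda>t. X (\<theta> t)) has_real_derivative C / P (Y (\<theta> t))) (at t)"
    using DERIV_chain2[OF X(1)[OF s] \<theta>(2)[OF t]] X(2)[OF s] by simp
  show y': "((\<lambda>t. Y (\<theta> t)) has_real_derivative Y' (\<theta> t) * w (\<theta> t)) (at t)"
    using DERIV_chain2[OF Y(2)[OF s] \<theta>(2)[OF t]] .
  show "((\<lambda>t. Y' (\<theta> t) * w (\<theta> t)) has_real_derivative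
      dP (Y (\<theta> t)) / (2 * P (Y (\<theta> t))) * ((C / P (Y (\<theta> t)))\<^sup>2 - (Y' (\<theta> t) * w (\<theta> t))\<^sup>2)) (at t)"
    using DERIV_chain2[OF V(1)[OF s] \<theta>(2)[OF t]] V(2)[OF s] by simp
  have "((\<lambda>t. C / P (Y (\<theta> t))) has_real_derivative
      (0 * P (Y (\<theta> t)) - C * (dP (Y (\<theta> t)) * (Y' (\<theta> t) * w (\<theta> t)))) / (P (Y (\<theta> t)) * P (Y (\<theta> t)))) (at t)"
    using DERIV_divide[OF DERIV_const DERIV_chain2[OF has_real_derivative_P[OF Y(1)[OF s]] y']] p by simp
  then show "((\<lambda>t. C / P (Y (\<theta> t))) has_real_derivative
      - (dP (Y (\<theta> t)) / P (Y (\<theta> t))) * (C / P (Y (\<theta> t))) * (Y' (\<theta> t) * w (\<theta> t))) (at t)"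
    using p by (simp add: field_simps)
  show "(C / P (Y (\<theta> t)), Y' (\<theta> t) * w (\<theta> t)) \<noteq> (0, 0)"
    using nonzero[OF s] p by auto
qed

text \<open>Solving \<open>s' = w s\<close> on all of \<open>D\<close> extends the geodesic through every point of the
  curve; maximality forces the extension to be the geodesic itself.\<close>
lemma maximal_geodesic_trace_eq:
  assumes mg: "maximal_geodesic I x y"
    and D: "open D" "is_interval D" and w: "continuous_on D w" "0 \<notin> w ` D"
    and \<theta>: "\<And>t. t \<in> I \<Longrightarrow> \<theta> t \<in> D" "\<And>t. t \<in> I \<Longrightarrow> (\<theta> has_real_derivative w (\<theta> t)) (at t)"
    and xy: "\<And>t. t \<in> I \<Longrightarrow> x t = X (\<theta> t) \<and> y t = Y (\<theta> t)"
    and geodesic: "\<And>J \<theta>'. open J \<Longrightarrow> is_interval J \<Longrightarrow> J \<noteq> {} \<Longrightarrow> (\<And>t. t \<in> J \<Longrightarrow> \<theta>' t \<in> D) \<Longrightarrow>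
      (\<And>t. t \<in> J \<Longrightarrow> (\<theta>' has_real_derivative w (\<theta>' t)) (at t)) \<Longrightarrow>
      geodesic_on J (\<lambda>t. X (\<theta>' t)) (\<lambda>t. Y (\<theta>' t))"
  shows "geo_trace I x y = (\<lambda>s. (X s, Y s)) ` D"
proof -
  have g: "geodesic_on I x y" using mg unfolding maximal_geodesic_def by blast
  obtain J \<theta>' where J: "open J" "is_interval J" "I \<subseteq> J" "\<theta>' ` J = D" "\<And>t. t \<in> I \<Longrightarrow> \<theta>' t = \<theta> t"
    "\<And>t. t \<in> J \<Longrightarrow> (\<theta>' has_real_derivative w (\<theta>' t)) (at t)"
    using autonomous_ode_maximal_solution[OF D w geodesic_on_interval(2,4)[OF g] \<theta>] by blast
  have "geodesic_on J (\<lambda>t. X (\<theta>' t)) (\<lambda>t. Y (\<theta>' t))"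
    using geodesic_on_interval(4)[OF g] J by (intro geodesic) auto
  then have "J = I" by (rule maximal_geodesic_extension_eq[OF mg _ J(3)]) (simp add: J(5) xy)
  then have "geo_trace I x y = (\<lambda>t. (X (\<theta>' t), Y (\<theta>' t))) ` J"
    unfolding geo_trace_def by (auto simp: J(5) xy)
  then show ?thesis by (simp add: image_image J(4)[symmetric])
qed

section \<open>Geodesics without turning points\<close>

lemma energy_gap_pos:
  assumes "4 * C\<^sup>2 \<le> E" "E > 0" "v > 0"
  shows "E * P v - C\<^sup>2 > 0"
proof -
  have "E * P v > E * (1/4)" using P_gt_quarter[OF assms(3)] assms(2) by simp
  then show ?thesis using assms(1) by simp
qed

lemma has_real_derivative_vertical_speed:
  assumes v: "v > 0" and pos: "E * P v - C\<^sup>2 > 0"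
  shows "((\<lambda>v. sqrt (E * P v - C\<^sup>2) / P v) has_real_derivative
    dP v * (2 * C\<^sup>2 - E * P v) / (2 * P v ^ 2 * sqrt (E * P v - C\<^sup>2))) (at v)"
proof -
  define R where "R = sqrt (E * P v - C\<^sup>2)"
  have R: "R > 0" using pos by (simp add: R_def)
  have p: "P v > 0" using P_pos[OF v] .
  have E: "E = (R\<^sup>2 + C\<^sup>2) / P v" using pos p by (simp add: R_def field_simps)
  have "((\<lambda>v. E * P v - C\<^sup>2) has_real_derivative E * dP v) (at v)"
    using DERIV_diff[OF DERIV_cmult[OF has_real_derivative_P[OF v]] DERIV_const] by simp
  from DERIV_divide[OF DERIV_chain2[OF DERIV_real_sqrt[OF pos] this] has_real_derivative_P[OF v]]
  have "((\<lambda>v. sqrt (E * P v - C\<^sup>2) / P v) has_real_derivative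
      (inverse R / 2 * (E * dP v) * P v - R * dP v) / (P v * P v)) (at v)"
    using p by (simp add: R_def)
  also have "(inverse R / 2 * (E * dP v) * P v - R * dP v) / (P v * P v)
      = dP v * (2 * C\<^sup>2 - E * P v) / (2 * P v ^ 2 * R)"
    unfolding E using R p by (simp add: field_simps power2_eq_square)
  finally show ?thesis by (simp add: R_def)
qed

lemma geodesic_vertical_speed:
  assumes g: "geodesic_on I x y" and CE: "geodesic_constants I x y C E"
    and pos: "\<And>v. v > 0 \<Longrightarrow> E * P v - C\<^sup>2 > 0"
  obtains \<sigma> where "\<sigma> \<in> {1, -1}" "\<And>t. t \<in> I \<Longrightarrow> deriv y t = \<sigma> * sqrt (E * P (y t) - C\<^sup>2) / P (y t)"
proof -
  note d = geodesic_onD[OF g] and CE' = geodesic_constantsD[OF g CE]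
  have "deriv y t \<noteq> 0" if t: "t \<in> I" for t using CE'(3)[OF t] pos[OF d(1)[OF t]] by auto
  then have "0 \<notin> deriv y ` I" by (metis imageE)
  then obtain \<sigma> where \<sigma>: "\<sigma> \<in> {1, -1}" "\<And>t. t \<in> I \<Longrightarrow> \<sigma> * deriv y t > 0"
    using continuous_nonzero_sign[OF geodesic_on_interval(3) geodesic_on_continuous(2), OF g g] by blast
  have "deriv y t = \<sigma> * sqrt (E * P (y t) - C\<^sup>2) / P (y t)" if t: "t \<in> I" for t
  proof -
    have p: "P (y t) > 0" using P_pos[OF d(1)[OF t]] .
    have "(\<sigma> * (P (y t) * deriv y t))\<^sup>2 = E * P (y t) - C\<^sup>2"
      using CE'(3)[OF t] \<sigma>(1) by (auto simp: power_mult_distrib)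
    moreover have "\<sigma> * (P (y t) * deriv y t) > 0"
      using \<sigma>(2)[OF t] p by (metis mult.left_commute mult_pos_pos)
    ultimately have "\<sigma> * (P (y t) * deriv y t) = sqrt (E * P (y t) - C\<^sup>2)"
      by (metis less_eq_real_def real_sqrt_unique)
    then show ?thesis using \<sigma>(1) p by (auto simp: field_simps)
  qed
  with \<sigma>(1) show ?thesis using that by blast
qed

lemma geodesic_on_graph:
  assumes J: "open J" "is_interval J" "J \<noteq> {}" and \<sigma>: "\<sigma> \<in> {1, -1}"
    and pos: "\<And>v. v > 0 \<Longrightarrow> E * P v - C\<^sup>2 > 0"
    and G: "\<And>v. v > 0 \<Longrightarrow> (G has_real_derivative C / sqrt (E * P v - C\<^sup>2)) (at v)"
    and \<theta>: "\<And>t. t \<in> J \<Longrightarrow> \<theta> t > 0"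
      "\<And>t. t \<in> J \<Longrightarrow> (\<theta> has_real_derivative \<sigma> * sqrt (E * P (\<theta> t) - C\<^sup>2) / P (\<theta> t)) (at t)"
  shows "geodesic_on J (\<lambda>t. \<sigma> * G (\<theta> t) + c) \<theta>"
proof -
  define R where "R v = sqrt (E * P v - C\<^sup>2)" for v
  have R: "R v > 0" "(R v)\<^sup>2 = E * P v - C\<^sup>2" if "v > 0" for v
    using pos[OF that] by (simp_all add: R_def)
  define w where "w v = \<sigma> * R v / P v" for v
  show ?thesis
  proof (rule geodesic_on_reparametrization[OF J, where D = "{0<..}" and w = w and Y' = "\<lambda>_. 1" and C = C
        and X' = "\<lambda>v. \<sigma> * (C / R v)"
        and V = "\<lambda>v. \<sigma> * (dP v * (2 * C\<^sup>2 - E * P v) / (2 * P v ^ 2 * R v))"])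
    show "\<theta> t \<in> {0<..}" "(\<theta> has_real_derivative w (\<theta> t)) (at t)" if "t \<in> J" for t
      using \<theta> that by (simp_all add: w_def R_def)
    fix v :: real assume "v \<in> {0<..}"
    then have v: "v > 0" by simp
    have p: "P v > 0" using P_pos[OF v] .
    show "v > 0" "((\<lambda>v. v) has_real_derivative 1) (at v)" using v by auto
    show "((\<lambda>v. \<sigma> * G v + c) has_real_derivative \<sigma> * (C / R v)) (at v)"
      unfolding R_def using DERIV_add[OF DERIV_cmult[OF G[OF v]] DERIV_const, of \<sigma> c] by simp
    show "\<sigma> * (C / R v) * w v = C / P v"
      using \<sigma> R(1)[OF v] by (auto simp: w_def)
    show "((\<lambda>v. 1 * w v) has_real_derivative
        \<sigma> * (dP v * (2 * C\<^sup>2 - E * P v) / (2 * P v ^ 2 * R v))) (at v)"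
      unfolding w_def R_def using DERIV_cmult[OF has_real_derivative_vertical_speed[OF v pos[OF v]], of \<sigma>]
      by (simp add: mult.assoc)
    have E: "E = ((R v)\<^sup>2 + C\<^sup>2) / P v" using R(2)[OF v] p by (simp add: field_simps)
    show "\<sigma> * (dP v * (2 * C\<^sup>2 - E * P v) / (2 * P v ^ 2 * R v)) * w v
        = dP v / (2 * P v) * ((C / P v)\<^sup>2 - (1 * w v)\<^sup>2)"
      unfolding E using \<sigma> R(1)[OF v] p by (auto simp: w_def field_simps power2_eq_square)
    show "(C, 1 * w v) \<noteq> (0, 0)" using \<sigma> R(1)[OF v] p by (auto simp: w_def)
  qed
qed

lemma maximal_geodesic_graph:
  assumes mg: "maximal_geodesic I x y" and CE: "geodesic_constants I x y C E"
    and pos: "\<And>v. v > 0 \<Longrightarrow> E * P v - C\<^sup>2 > 0"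
    and G: "\<And>v. v > 0 \<Longrightarrow> (G has_real_derivative C / sqrt (E * P v - C\<^sup>2)) (at v)"
  obtains e c where "e \<in> {1, -1}" "geo_trace I x y = (\<lambda>v. (e * G v + c, v)) ` {0<..}"
proof -
  have g: "geodesic_on I x y" using mg unfolding maximal_geodesic_def by blast
  note d = geodesic_onD[OF g]
  obtain \<sigma> where \<sigma>: "\<sigma> \<in> {1, -1}"
    and dy: "\<And>t. t \<in> I \<Longrightarrow> deriv y t = \<sigma> * sqrt (E * P (y t) - C\<^sup>2) / P (y t)"
    using geodesic_vertical_speed[OF g CE pos] by blast
  define w where "w v = \<sigma> * sqrt (E * P v - C\<^sup>2) / P v" for v
  have w_pos: "\<sigma> * w v > 0" if "v > 0" for v
    using \<sigma> pos[OF that] P_pos[OF that] by (auto simp: w_def)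
  have "\<exists>c. \<forall>t\<in>I. x t - \<sigma> * G (y t) = c"
  proof (rule has_field_derivative_zero_constant[OF geodesic_on_interval(2)[OF g]])
    fix t assume t: "t \<in> I"
    have "((\<lambda>t. x t - \<sigma> * G (y t)) has_real_derivative
        deriv x t - \<sigma> * (C / sqrt (E * P (y t) - C\<^sup>2) * deriv y t)) (at t)"
      by (intro DERIV_diff DERIV_cmult DERIV_chain2[OF G] d t)
    moreover have "deriv x t - \<sigma> * (C / sqrt (E * P (y t) - C\<^sup>2) * deriv y t) = 0"
      using geodesic_constantsD(2)[OF g CE t] dy[OF t] \<sigma> pos[OF d(1)[OF t]] by auto
    ultimately show "((\<lambda>t. x t - \<sigma> * G (y t)) has_real_derivative 0) (at t within I)"
      by (simp add: has_field_derivative_at_within)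
  qed
  then obtain c where c: "\<And>t. t \<in> I \<Longrightarrow> x t = \<sigma> * G (y t) + c"
    by (metis add.commute diff_add_cancel)
  have "geo_trace I x y = (\<lambda>v. (\<sigma> * G v + c, v)) ` {0<..}"
  proof (rule maximal_geodesic_trace_eq[OF mg, where w = w and \<theta> = y])
    show "open {0::real<..}" "is_interval {0::real<..}" by (auto simp: is_interval_1)
    show "continuous_on {0<..} w"
      unfolding w_def by (intro continuous_intros continuous_on_P) (fastforce dest: P_pos)
    show "0 \<notin> w ` {0<..}" using w_pos by (metis greaterThan_iff imageE mult_zero_right less_irrefl)
    show "y t \<in> {0<..}" "(y has_real_derivative w (y t)) (at t)" if "t \<in> I" for t
      using d(1,3)[OF that] dy[OF that] by (auto simp: w_def)
    show "x t = \<sigma> * G (y t) + c \<and> y t = y t" if "t \<in> I" for t using c[OF that] by simp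
    fix J \<theta> assume "open J" "is_interval J" "J \<noteq> {}"
      and "\<And>t. t \<in> J \<Longrightarrow> \<theta> t \<in> {0<..}" "\<And>t. t \<in> J \<Longrightarrow> (\<theta> has_real_derivative w (\<theta> t)) (at t)"
    then show "geodesic_on J (\<lambda>t. \<sigma> * G (\<theta> t) + c) (\<lambda>t. \<theta> t)"
      using geodesic_on_graph[OF _ _ _ \<sigma> pos G] by (simp add: w_def)
  qed
  then show ?thesis using that \<sigma> by blast
qed

lemma graph_eq_hmove_image:
  "(\<lambda>v. (e * H v + c, v)) ` {0<..} = hmove e (c + e * H0) ` {(u, v). 0 < v \<and> u = H v - H0}"
proof -
  have "(\<lambda>v. (e * H v + c, v)) ` {0<..} = hmove e (c + e * H0) ` ((\<lambda>v. (H v - H0, v)) ` {0<..})"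
    unfolding image_image by (simp add: hmove_def algebra_simps)
  also have "(\<lambda>v. (H v - H0, v)) ` {0<..} = {(u, v). 0 < v \<and> u = H v - H0}" by auto
  finally show ?thesis .
qed

lemma maximal_geodesic_graph_curve:
  assumes mg: "maximal_geodesic I x y" and CE: "geodesic_constants I x y C E" and C: "C \<noteq> 0"
    and pos: "\<And>v. v > 0 \<Longrightarrow> E * P v - C\<^sup>2 > 0"
    and H: "\<And>v. v > 0 \<Longrightarrow> (H has_real_derivative \<bar>C\<bar> / sqrt (E * P v - C\<^sup>2)) (at v)"
  obtains e c where "e \<in> {1, -1}" "geo_trace I x y = hmove e c ` {(u, v). 0 < v \<and> u = H v - H 1}"
proof -
  have "((\<lambda>v. sgn C * H v) has_real_derivative C / sqrt (E * P v - C\<^sup>2)) (at v)" if "v > 0" for v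
    using DERIV_cmult[OF H[OF that], of "sgn C"] by (simp add: sgn_mult_abs)
  then obtain e c where e: "e \<in> {1, -1}"
    and trace: "geo_trace I x y = (\<lambda>v. (e * (sgn C * H v) + c, v)) ` {0<..}"
    using maximal_geodesic_graph[OF mg CE pos] by blast
  have "geo_trace I x y = (\<lambda>v. ((e * sgn C) * H v + c, v)) ` {0<..}"
    unfolding trace by (simp add: mult.assoc)
  also have "\<dots> = hmove (e * sgn C) (c + e * sgn C * H 1) ` {(u, v). 0 < v \<and> u = H v - H 1}"
    by (rule graph_eq_hmove_image)
  finally have "geo_trace I x y = hmove (e * sgn C) (c + e * sgn C * H 1) ` {(u, v). 0 < v \<and> u = H v - H 1}" .
  moreover have "e * sgn C \<in> {1, -1}" using e C by (auto simp: sgn_if)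
  ultimately show ?thesis using that by blast
qed

lemma maximal_geodesic_vertical:
  assumes mg: "maximal_geodesic I x y" and CE: "geodesic_constants I x y 0 E"
  obtains c where "geo_trace I x y = hmove 1 c ` curve_i"
proof -
  have g: "geodesic_on I x y" using mg unfolding maximal_geodesic_def by blast
  obtain t0 where "t0 \<in> I" using geodesic_on_interval(4)[OF g] by blast
  then have E: "E > 0" using geodesic_constantsD(1)[OF g CE] by blast
  have pos: "E * P v - 0\<^sup>2 > 0" if "v > 0" for v using energy_gap_pos[of 0 E v] E that by simp
  have G: "((\<lambda>_. 0) has_real_derivative 0 / sqrt (E * P v - 0\<^sup>2)) (at v)" for v :: real by simp
  obtain e c where "geo_trace I x y = (\<lambda>v. (e * 0 + c, v)) ` {0<..}"
    using maximal_geodesic_graph[OF mg CE pos G] by blast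
  also have "\<dots> = hmove 1 c ` {(u, v). 0 < v \<and> u = 0 - 0}"
    using graph_eq_hmove_image[of 1 "\<lambda>_. 0" c 0] by simp
  also have "{(u, v). 0 < v \<and> u = 0 - 0} = curve_i" by (auto simp: curve_i_def)
  finally show ?thesis using that by blast
qed

lemma has_real_derivative_cosh_graph:
  assumes C: "C \<noteq> 0" and E: "4 * C\<^sup>2 = E" and v: "v > 0"
  shows "((\<lambda>v. cosh v / sqrt 3) has_real_derivative \<bar>C\<bar> / sqrt (E * P v - C\<^sup>2)) (at v)"
proof -
  have sh: "sinh v > 0" using v by simp
  have "E * P v - C\<^sup>2 = 3 * C\<^sup>2 / sinh v ^ 2"
    using sh by (simp add: P_sinh[OF v] E[symmetric] field_simps)
  then have eq: "sqrt (E * P v - C\<^sup>2) = sqrt 3 * \<bar>C\<bar> / sinh v"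
    using sh by (simp add: real_sqrt_mult real_sqrt_divide)
  have "\<bar>C\<bar> / sqrt (E * P v - C\<^sup>2) = sinh v / sqrt 3"
    unfolding eq using sh C by simp
  moreover have "((\<lambda>v. cosh v / sqrt 3) has_real_derivative sinh v / sqrt 3) (at v)"
    using DERIV_cdivide[OF has_field_derivative_cosh[OF DERIV_ident]] by simp
  ultimately show ?thesis by simp
qed

text \<open>The curves (iii) for different \<open>a\<close> are horizontal translates of each other, so
  \<open>a = 1\<close> suffices.\<close>
lemma maximal_geodesic_critical:
  assumes mg: "maximal_geodesic I x y" and CE: "geodesic_constants I x y C E" and E: "4 * C\<^sup>2 = E"
  obtains e c where "e \<in> {1, -1}" "geo_trace I x y = hmove e c ` curve_iii 1"
proof -
  have g: "geodesic_on I x y" using mg unfolding maximal_geodesic_def by blast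
  obtain t0 where "t0 \<in> I" using geodesic_on_interval(4)[OF g] by blast
  then have "E > 0" using geodesic_constantsD(1)[OF g CE] by blast
  then have C: "C \<noteq> 0" using E by auto
  have "E * P v - C\<^sup>2 > 0" if "v > 0" for v using energy_gap_pos[of C E v] E \<open>E > 0\<close> that by simp
  from maximal_geodesic_graph_curve[OF mg CE C this has_real_derivative_cosh_graph[OF C E]]
  obtain e c where "e \<in> {1, -1}"
    "geo_trace I x y = hmove e c ` {(u, v). 0 < v \<and> u = cosh v / sqrt 3 - cosh 1 / sqrt 3}" by blast
  moreover have "{(u, v). 0 < v \<and> u = cosh v / sqrt 3 - cosh 1 / sqrt 3} = curve_iii 1"
    by (auto simp: curve_iii_def diff_divide_distrib)
  ultimately show ?thesis using that by simp
qed

lemma has_real_derivative_F4: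
  assumes K: "m\<^sup>2 * sinh a ^ 2 - 3 > 0"
  shows "(F4 a m has_real_derivative sqrt (3 + sinh a ^ 2) * sinh v /
    sqrt ((m\<^sup>2 * sinh a ^ 2 - 3) * cosh v ^ 2 + 3 * cosh a ^ 2 + 2 * m\<^sup>2 * sinh a ^ 2)) (at v)"
proof -
  define k where "k = m\<^sup>2 * sinh a ^ 2 - 3"
  define B where "B = 3 * cosh a ^ 2 + 2 * m\<^sup>2 * sinh a ^ 2"
  define S where "S = sqrt (k * cosh v ^ 2 + B)"
  have k: "k > 0" using K by (simp add: k_def)
  have "B > 0" by (simp add: B_def add_pos_nonneg)
  then have arg: "k * cosh v ^ 2 + B > 0" using k by (simp add: add_nonneg_pos)
  then have S: "S > 0" by (simp add: S_def)
  define g where "g = k * cosh v + sqrt k * S"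
  have g: "g > 0" using k S by (simp add: g_def add_pos_pos)
  have "((\<lambda>v. k * cosh v ^ 2 + B) has_real_derivative k * (2 * cosh v * sinh v)) (at v)"
    by (auto intro!: derivative_eq_intros)
  from DERIV_chain2[OF DERIV_real_sqrt[OF arg] this]
  have "((\<lambda>v. sqrt (k * cosh v ^ 2 + B)) has_real_derivative inverse S / 2 * (k * (2 * cosh v * sinh v))) (at v)"
    by (simp add: S_def)
  then have "((\<lambda>v. k * cosh v + sqrt k * sqrt (k * cosh v ^ 2 + B)) has_real_derivative
      k * sinh v + sqrt k * (inverse S / 2 * (k * (2 * cosh v * sinh v)))) (at v)"
    by (intro DERIV_add DERIV_cmult) (auto intro!: derivative_eq_intros)
  from DERIV_cmult[OF DERIV_chain2[OF DERIV_ln_divide this], of "sqrt (3 + sinh a ^ 2) / sqrt k"]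
  have "(F4 a m has_real_derivative sqrt (3 + sinh a ^ 2) / sqrt k *
      (1 / g * (k * sinh v + sqrt k * (inverse S / 2 * (k * (2 * cosh v * sinh v)))))) (at v)"
    using g unfolding F4_def[abs_def] k_def B_def S_def g_def by (simp add: add.assoc)
  moreover have "k * sinh v + sqrt k * (inverse S / 2 * (k * (2 * cosh v * sinh v))) = sqrt k * sinh v * g / S"
    using S k by (simp add: g_def field_simps)
  ultimately show ?thesis using g S k by (simp add: S_def k_def B_def add.assoc)
qed

text \<open>\<open>m\<close> is the slope with which the geodesic crosses the line \<open>y = 1\<close>; every geodesic of
  type (iv) crosses it, so \<open>a = 1\<close> suffices.\<close>
lemma slope_at_one_gt:
  assumes C: "C \<noteq> 0" and Q: "4 * C\<^sup>2 < E"
  defines "m \<equiv> sqrt (P 1 * E / C\<^sup>2 - 1)"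
  shows "C\<^sup>2 * (1 + m\<^sup>2) = (sinh 1 ^ 2 + 3) * E / (4 * sinh 1 ^ 2)"
    "m\<^sup>2 * sinh 1 ^ 2 - 3 > 0" "m > sqrt 3 / sinh 1"
proof -
  define s where "s = sinh (1::real)"
  have s: "s > 0" by (simp add: s_def)
  have P1: "P 1 = (s\<^sup>2 + 3) / (4 * s\<^sup>2)" using sinh_sq_mult_P[of 1] s by (simp add: s_def field_simps)
  have "E / C\<^sup>2 > 4" using Q C by (simp add: field_simps)
  then have "(1/4) * 4 < P 1 * (E / C\<^sup>2)" using P_gt_quarter[of 1] by (intro mult_strict_mono) auto
  then have m2: "m\<^sup>2 = P 1 * E / C\<^sup>2 - 1" and m0: "m \<ge> 0" by (simp_all add: m_def)
  have mm: "C\<^sup>2 * (1 + m\<^sup>2) = (s\<^sup>2 + 3) * E / (4 * s\<^sup>2)"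
    unfolding m2 P1 using C s by (simp add: field_simps)
  then show "C\<^sup>2 * (1 + m\<^sup>2) = (sinh 1 ^ 2 + 3) * E / (4 * sinh 1 ^ 2)" by (simp add: s_def)
  have "s\<^sup>2 + 3 > 0" by (simp add: add_nonneg_pos)
  from mult_strict_left_mono[OF Q this] have "(s\<^sup>2 + 3) * (4 * C\<^sup>2) < 4 * s\<^sup>2 * (C\<^sup>2 * (1 + m\<^sup>2))"
    unfolding mm using s by simp
  then have "C\<^sup>2 * (m\<^sup>2 * s\<^sup>2 - 3) > 0" by (simp add: algebra_simps)
  then show K: "m\<^sup>2 * sinh 1 ^ 2 - 3 > 0" by (simp add: s_def zero_less_mult_iff)
  have "sqrt 3 < sqrt ((m * s)\<^sup>2)" using K by (intro real_sqrt_less_mono) (simp add: s_def power_mult_distrib)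
  also have "\<dots> = m * s" using s m0 by (simp add: abs_mult)
  finally show "m > sqrt 3 / sinh 1" using s by (simp add: s_def pos_divide_less_eq)
qed

lemma has_real_derivative_F4_graph:
  assumes C: "C \<noteq> 0" and Q: "4 * C\<^sup>2 < E" and v: "v > 0"
  defines "m \<equiv> sqrt (P 1 * E / C\<^sup>2 - 1)"
  shows "(F4 1 m has_real_derivative \<bar>C\<bar> / sqrt (E * P v - C\<^sup>2)) (at v)"
proof -
  note slope = slope_at_one_gt[OF C Q, folded m_def]
  define s where "s = sinh (1::real)"
  define X where "X = E * P v - C\<^sup>2"
  define Y where "Y = (m\<^sup>2 * s\<^sup>2 - 3) * cosh v ^ 2 + 3 * cosh 1 ^ 2 + 2 * m\<^sup>2 * s\<^sup>2"
  have X: "X > 0" using energy_gap_pos[of C E v] Q v zero_le_power2[of C] by (simp add: X_def)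
  have Y: "Y > 0" using slope(2) by (simp add: Y_def s_def add_pos_nonneg add_nonneg_pos)
  have "C\<^sup>2 * Y = (3 + s\<^sup>2) * sinh v ^ 2 * X"
  proof -
    have Y_sinh: "Y = (m\<^sup>2 * s\<^sup>2 - 3) * sinh v ^ 2 + 3 * s\<^sup>2 * (1 + m\<^sup>2)"
      by (simp add: Y_def s_def cosh_square_eq algebra_simps)
    have "C\<^sup>2 * Y = (C\<^sup>2 * (1 + m\<^sup>2)) * (s\<^sup>2 * sinh v ^ 2 + 3 * s\<^sup>2) - C\<^sup>2 * (s\<^sup>2 + 3) * sinh v ^ 2"
      unfolding Y_sinh by (simp add: algebra_simps)
    also have "\<dots> = (s\<^sup>2 + 3) * (E * ((sinh v ^ 2 + 3) / 4) - C\<^sup>2 * sinh v ^ 2)"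
      unfolding slope(1)[folded s_def] by (simp add: s_def field_simps)
    also have "(sinh v ^ 2 + 3) / 4 = sinh v ^ 2 * P v" using sinh_sq_mult_P[OF v] by simp
    also have "(s\<^sup>2 + 3) * (E * (sinh v ^ 2 * P v) - C\<^sup>2 * sinh v ^ 2) = (3 + s\<^sup>2) * sinh v ^ 2 * X"
      by (simp add: X_def algebra_simps)
    finally show ?thesis .
  qed
  then have "(3 + s\<^sup>2) * sinh v ^ 2 / Y = C\<^sup>2 / X" using X Y by (simp add: field_simps)
  moreover have "sqrt (3 + s\<^sup>2) * sinh v / sqrt Y = sqrt ((3 + s\<^sup>2) * sinh v ^ 2 / Y)"
    using v by (simp add: real_sqrt_mult real_sqrt_divide)
  ultimately have "sqrt (3 + s\<^sup>2) * sinh v / sqrt Y = \<bar>C\<bar> / sqrt X" by (simp add: real_sqrt_divide)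
  with has_real_derivative_F4[OF slope(2), of v] show ?thesis by (simp add: X_def Y_def s_def)
qed

lemma maximal_geodesic_escaping:
  assumes mg: "maximal_geodesic I x y" and CE: "geodesic_constants I x y C E"
    and C: "C \<noteq> 0" and Q: "4 * C\<^sup>2 < E"
  obtains e c m where "e \<in> {1, -1}" "m > sqrt 3 / sinh 1" "geo_trace I x y = hmove e c ` curve_iv 1 m"
proof -
  define m where "m = sqrt (P 1 * E / C\<^sup>2 - 1)"
  have "E * P v - C\<^sup>2 > 0" if "v > 0" for v
    using energy_gap_pos[of C E v] Q that zero_le_power2[of C] by simp
  from maximal_geodesic_graph_curve[OF mg CE C this has_real_derivative_F4_graph[OF C Q, folded m_def]]
  obtain e c where "e \<in> {1, -1}" "geo_trace I x y = hmove e c ` curve_iv 1 m"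
    unfolding curve_iv_def by blast
  moreover have "m > sqrt 3 / sinh 1" using slope_at_one_gt(3)[OF C Q] by (simp add: m_def)
  ultimately show ?thesis using that by blast
qed

section \<open>Turning geodesics\<close>

text \<open>The arch of type (ii) with top \<open>(0, a)\<close>, parametrised by \<open>\<theta> = x / scale_ii a\<close>: it is
  \<open>cosh y = cosh a * cos \<theta>\<close> for \<open>\<bar>\<theta>\<bar> < angle_ii a\<close>, and \<open>slope_ii a\<close> is the derivative of
  \<open>height_ii a\<close>.\<close>
definition height_ii :: "real \<Rightarrow> real \<Rightarrow> real" where
  "height_ii a \<theta> = arcosh (cosh a * cos \<theta>)"

definition slope_ii :: "real \<Rightarrow> real \<Rightarrow> real" where
  "slope_ii a \<theta> = - cosh a * sin \<theta> / sinh (height_ii a \<theta>)"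

definition angle_ii :: "real \<Rightarrow> real" where
  "angle_ii a = arccos (1 / cosh a)"

definition scale_ii :: "real \<Rightarrow> real" where
  "scale_ii a = sqrt ((3 + sinh a ^ 2) / 3)"

lemma scale_ii_pos: "scale_ii a > 0"
  unfolding scale_ii_def by (simp add: add_pos_nonneg)

lemma scale_ii_sq: "scale_ii a ^ 2 = (2 + cosh a ^ 2) / 3"
  unfolding scale_ii_def by (simp add: add_pos_nonneg cosh_square_eq)

lemma angle_ii_bounds:
  assumes "a > 0"
  shows "0 < angle_ii a" "angle_ii a < pi / 2"
proof -
  have b: "0 < 1 / cosh a" "1 / cosh a < 1" using one_less_cosh[of a] assms by auto
  then have "-1 \<le> 1 / cosh a" by linarith
  with b show "0 < angle_ii a" "angle_ii a < pi / 2"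
    unfolding angle_ii_def using arccos_less_arccos[of "1 / cosh a" 1] arccos_less_arccos[of 0 "1 / cosh a"]
    by simp_all
qed

lemma cos_angle_ii: "cos (angle_ii a) = 1 / cosh a"
proof -
  have "0 < 1 / cosh a" by simp
  then have "-1 \<le> 1 / cosh a" by linarith
  moreover have "1 / cosh a \<le> 1" using cosh_real_ge_1[of a] by simp
  ultimately show ?thesis unfolding angle_ii_def by (rule cos_arccos)
qed

lemma cos_gt_iff_abs_less_angle_ii:
  assumes "a > 0" "\<bar>\<theta>\<bar> \<le> pi"
  shows "cosh a * cos \<theta> > 1 \<longleftrightarrow> \<bar>\<theta>\<bar> < angle_ii a"
proof -
  have "cosh a * cos \<theta> > 1 \<longleftrightarrow> cos (angle_ii a) < cos \<bar>\<theta>\<bar>"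
    unfolding cos_angle_ii by (simp add: pos_divide_less_eq mult.commute)
  also have "\<dots> \<longleftrightarrow> \<bar>\<theta>\<bar> < angle_ii a"
    using angle_ii_bounds[OF assms(1)] assms(2) by (intro cos_mono_less_eq) auto
  finally show ?thesis .
qed

lemma cosh_mult_cos_gt_1:
  assumes "a > 0" "\<bar>\<theta>\<bar> < angle_ii a"
  shows "cosh a * cos \<theta> > 1"
  using cos_gt_iff_abs_less_angle_ii assms angle_ii_bounds(2)[OF assms(1)] by force

lemma cosh_height_ii:
  assumes "a > 0" "\<bar>\<theta>\<bar> < angle_ii a"
  shows "cosh (height_ii a \<theta>) = cosh a * cos \<theta>"
  using cosh_mult_cos_gt_1[OF assms] by (simp add: height_ii_def)

lemma height_ii_pos:
  assumes "a > 0" "\<bar>\<theta>\<bar> < angle_ii a"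
  shows "height_ii a \<theta> > 0"
  using cosh_mult_cos_gt_1[OF assms] by (simp add: height_ii_def)

lemma sinh_height_ii:
  assumes "a > 0" "\<bar>\<theta>\<bar> < angle_ii a"
  shows "sinh (height_ii a \<theta>) = sqrt ((cosh a * cos \<theta>)\<^sup>2 - 1)"
  using cosh_mult_cos_gt_1[OF assms] by (simp add: height_ii_def sinh_arcosh_real)

lemma height_ii_le:
  assumes "a > 0" "\<bar>\<theta>\<bar> < angle_ii a"
  shows "height_ii a \<theta> \<le> a"
proof -
  have "cosh (height_ii a \<theta>) \<le> cosh a" using cosh_height_ii[OF assms] assms(1) by (simp add: mult_left_le)
  then show ?thesis using cosh_real_nonneg_le_iff height_ii_pos[OF assms] assms(1) by simp
qed

lemma slope_ii_sq:
  assumes "a > 0" "\<bar>\<theta>\<bar> < angle_ii a"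
  shows "(slope_ii a \<theta>)\<^sup>2 * sinh (height_ii a \<theta>) ^ 2 = cosh a ^ 2 - 1 - sinh (height_ii a \<theta>) ^ 2"
proof -
  have "(cosh a * sin \<theta>)\<^sup>2 = cosh a ^ 2 - (cosh a * cos \<theta>)\<^sup>2"
    by (simp add: sin_squared_eq algebra_simps)
  then show ?thesis
    using cosh_height_ii[OF assms] height_ii_pos[OF assms] cosh_square_eq[of "height_ii a \<theta>"]
    by (simp add: slope_ii_def power_divide)
qed

lemma has_real_derivative_height_ii:
  assumes "a > 0" "\<bar>\<theta>\<bar> < angle_ii a"
  shows "(height_ii a has_real_derivative slope_ii a \<theta>) (at \<theta>)"
proof -
  have gt: "cosh a * cos \<theta> > 1" using cosh_mult_cos_gt_1[OF assms] .
  have "((\<lambda>\<theta>. arcosh (cosh a * cos \<theta>)) has_real_derivative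
      1 / sqrt ((cosh a * cos \<theta>)\<^sup>2 - 1) * (cosh a * - sin \<theta>)) (at \<theta>)"
  proof (rule DERIV_chain2[where f = arcosh and g = "\<lambda>\<theta>. cosh a * cos \<theta>"])
    show "(arcosh has_real_derivative 1 / sqrt ((cosh a * cos \<theta>)\<^sup>2 - 1)) (at (cosh a * cos \<theta>))"
      using arcosh_real_has_field_derivative[OF gt, where A = UNIV] .
  qed (auto intro!: derivative_eq_intros)
  then show ?thesis unfolding slope_ii_def sinh_height_ii[OF assms] by (simp add: height_ii_def[abs_def])
qed

lemma slope_ii_ode_rhs:
  assumes a: "a > 0" and \<theta>: "\<bar>\<theta>\<bar> < angle_ii a"
  defines "h \<equiv> height_ii a \<theta>"
  shows "dP h * (scale_ii a ^ 2 + (slope_ii a \<theta>)\<^sup>2) / (2 * P h) = - cosh h * (cosh a ^ 2 - 1) / sinh h ^ 3"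
proof -
  have sh: "sinh h > 0" using height_ii_pos[OF a \<theta>] by (simp add: h_def)
  have "sinh h ^ 2 * (scale_ii a ^ 2 + (slope_ii a \<theta>)\<^sup>2) = (cosh a ^ 2 - 1) * (sinh h ^ 2 + 3) / 3"
    using slope_ii_sq[OF a \<theta>] cosh_square_eq[of a] by (simp add: h_def scale_ii_sq field_simps)
  then have K: "scale_ii a ^ 2 + (slope_ii a \<theta>)\<^sup>2 = (cosh a ^ 2 - 1) * (sinh h ^ 2 + 3) / (3 * sinh h ^ 2)"
    using sh by (simp add: field_simps)
  have Ph: "P h = (sinh h ^ 2 + 3) / (4 * sinh h ^ 2)"
    using sinh_sq_mult_P[OF height_ii_pos[OF a \<theta>]] sh by (simp add: h_def field_simps)
  have "dP h * (scale_ii a ^ 2 + (slope_ii a \<theta>)\<^sup>2) = - 2 * cosh h * (cosh a ^ 2 - 1) * P h / sinh h ^ 3"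
    unfolding K Ph using sh by (simp add: dP_def field_simps)
  then show ?thesis using P_pos[OF height_ii_pos[OF a \<theta>]] sh by (simp add: h_def[symmetric] field_simps)
qed

lemma has_real_derivative_slope_ii:
  assumes a: "a > 0" and \<theta>: "\<bar>\<theta>\<bar> < angle_ii a"
  shows "(slope_ii a has_real_derivative
    dP (height_ii a \<theta>) * (scale_ii a ^ 2 + (slope_ii a \<theta>)\<^sup>2) / (2 * P (height_ii a \<theta>))) (at \<theta>)"
proof -
  define h where "h = height_ii a \<theta>"
  define Z where "Z = slope_ii a \<theta>"
  have sh: "sinh h > 0" using height_ii_pos[OF a \<theta>] by (simp add: h_def)
  have ch: "cosh h = cosh a * cos \<theta>" using cosh_height_ii[OF a \<theta>] by (simp add: h_def)
  have sin: "cosh a * sin \<theta> = - Z * sinh h" using sh by (simp add: Z_def h_def slope_ii_def)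
  have "((\<lambda>\<theta>. - cosh a * sin \<theta>) has_real_derivative - cosh a * cos \<theta>) (at \<theta>)"
    by (auto intro!: derivative_eq_intros)
  from DERIV_divide[OF this has_field_derivative_sinh[OF has_real_derivative_height_ii[OF a \<theta>]]]
  have "((\<lambda>\<theta>. - cosh a * sin \<theta> / sinh (height_ii a \<theta>)) has_real_derivative
      ((- cosh a * cos \<theta>) * sinh h - (- cosh a * sin \<theta>) * (cosh h * Z)) / (sinh h * sinh h)) (at \<theta>)"
    using sh by (simp add: h_def Z_def)
  moreover have "(- cosh a * cos \<theta>) * sinh h - (- cosh a * sin \<theta>) * (cosh h * Z)
      = - cosh h * (sinh h + Z\<^sup>2 * sinh h ^ 2 / sinh h)"
    using ch sin sh by (simp add: algebra_simps power2_eq_square)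
  moreover have "\<dots> = - cosh h * (cosh a ^ 2 - 1) / sinh h"
    unfolding slope_ii_sq[OF a \<theta>, folded h_def Z_def] using sh by (simp add: field_simps power2_eq_square)
  ultimately have "((\<lambda>\<theta>. - cosh a * sin \<theta> / sinh (height_ii a \<theta>)) has_real_derivative
      - cosh h * (cosh a ^ 2 - 1) / sinh h ^ 3) (at \<theta>)"
    using sh by (simp add: power3_eq_cube mult.assoc)
  then have "(slope_ii a has_real_derivative - cosh h * (cosh a ^ 2 - 1) / sinh h ^ 3) (at \<theta>)"
    unfolding slope_ii_def[abs_def] by simp
  then show ?thesis unfolding slope_ii_ode_rhs[OF a \<theta>] h_def .
qed

lemma exists_angle_ii:
  assumes a: "a > 0" and u: "u > 1" and uv: "u\<^sup>2 + v\<^sup>2 = cosh a ^ 2"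
  obtains \<theta> where "\<bar>\<theta>\<bar> < angle_ii a" "cosh a * cos \<theta> = u" "- cosh a * sin \<theta> = v"
proof -
  have A: "cosh a > 0" by simp
  have "u\<^sup>2 \<le> (cosh a)\<^sup>2" using uv zero_le_power2[of v] by linarith
  then have "u \<le> cosh a" by (rule power2_le_imp_le) simp
  then have r: "-1 \<le> u / cosh a" "u / cosh a \<le> 1" using u A by (auto simp: field_simps)
  define \<phi> where "\<phi> = arccos (u / cosh a)"
  have cos: "cosh a * cos \<phi> = u" using r A by (simp add: \<phi>_def)
  have "cosh a * sin \<phi> = cosh a * sqrt (1 - (u / cosh a)\<^sup>2)" using r by (simp add: \<phi>_def sin_arccos)
  also have "\<dots> = sqrt ((cosh a)\<^sup>2 * (1 - (u / cosh a)\<^sup>2))" by (simp add: real_sqrt_mult)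
  also have "(cosh a)\<^sup>2 * (1 - (u / cosh a)\<^sup>2) = (cosh a)\<^sup>2 - u\<^sup>2"
    by (simp add: power_divide right_diff_distrib)
  also have "\<dots> = v\<^sup>2" using uv by simp
  finally have sin: "cosh a * sin \<phi> = \<bar>v\<bar>" by simp
  have "0 \<le> \<phi>" "\<phi> \<le> pi" using r arccos_lbound arccos_ubound by (simp_all add: \<phi>_def)
  define \<theta> where "\<theta> = (if v \<ge> 0 then - \<phi> else \<phi>)"
  have "\<bar>\<theta>\<bar> \<le> pi" "cosh a * cos \<theta> = u" "- cosh a * sin \<theta> = v"
    using \<open>0 \<le> \<phi>\<close> \<open>\<phi> \<le> pi\<close> cos sin by (auto simp: \<theta>_def)
  moreover from this have "\<bar>\<theta>\<bar> < angle_ii a" using cos_gt_iff_abs_less_angle_ii[OF a, of \<theta>] u by simp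
  ultimately show ?thesis using that by blast
qed

text \<open>For \<open>\<kappa>\<^sup>2 = 4 C\<^sup>2 / (4 C\<^sup>2 - E)\<close> the point \<open>(U, V)\<close> rotates uniformly with the angle
  \<open>x / \<kappa>\<close> on the circle of radius \<open>sqrt (3 \<kappa>\<^sup>2 - 2)\<close>, the hyperbolic cosine of the top height.\<close>
lemma geodesic_turning_coordinates:
  assumes g: "geodesic_on I x y" and CE: "geodesic_constants I x y C E" and C: "C \<noteq> 0"
    and \<kappa>: "\<kappa> > 0" "\<kappa>\<^sup>2 * (4 * C\<^sup>2 - E) = 4 * C\<^sup>2" and t: "t \<in> I"
  defines "U \<equiv> \<lambda>t. cosh (y t)" and "V \<equiv> \<lambda>t. \<kappa> * sinh (y t) * P (y t) * deriv y t / C"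
  shows "(U has_real_derivative V t * (deriv x t / \<kappa>)) (at t)"
    "(V has_real_derivative - U t * (deriv x t / \<kappa>)) (at t)"
    "(U t)\<^sup>2 + (V t)\<^sup>2 = 3 * \<kappa>\<^sup>2 - 2"
proof -
  note d = geodesic_onD[OF g t] and CE' = geodesic_constantsD[OF g CE t]
  define q where "q = 4 * C\<^sup>2 - E"
  have "\<kappa>\<^sup>2 * q > 0" using \<kappa>(2) C by (simp add: q_def)
  then have q: "q > 0" using \<kappa>(1) by (simp add: zero_less_mult_iff)
  have \<kappa>2: "\<kappa>\<^sup>2 = 4 * C\<^sup>2 / q" using \<kappa>(2) q by (simp add: q_def field_simps)
  let ?y' = "deriv y t" and ?x' = "deriv x t" and ?p = "P (y t)" and ?q = "dP (y t)"
    and ?sh = "sinh (y t)" and ?ch = "cosh (y t)"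
  have p: "?p > 0" using P_pos[OF d(1)] .
  have "V t * (?x' / \<kappa>) = ?sh * ?y'" using CE'(2) \<kappa>(1) C p by (simp add: V_def)
  then show "(U has_real_derivative V t * (?x' / \<kappa>)) (at t)"
    unfolding U_def using has_field_derivative_cosh[OF d(3)] by simp
  have "((\<lambda>t. sinh (y t) * P (y t) * deriv y t) has_real_derivative
      (?ch * ?y' * ?p + ?q * ?y' * ?sh) * ?y' + ?q / (2 * ?p) * (?x'\<^sup>2 - ?y'\<^sup>2) * (?sh * ?p)) (at t)"
    by (intro DERIV_mult has_field_derivative_sinh DERIV_chain2[OF has_real_derivative_P] d)
  also have "(?ch * ?y' * ?p + ?q * ?y' * ?sh) * ?y' + ?q / (2 * ?p) * (?x'\<^sup>2 - ?y'\<^sup>2) * (?sh * ?p)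
      = ?ch * (?p * ?y'\<^sup>2) + ?sh * ?q * (?x'\<^sup>2 + ?y'\<^sup>2) / 2"
    using p by (simp add: field_simps power2_eq_square)
  also have "\<dots> = - ?ch * q / (4 * ?p)"
  proof -
    have e1: "?p * ?y'\<^sup>2 = (E * ?p - C\<^sup>2) / ?p" using CE'(3) p by (simp add: field_simps power2_eq_square)
    have e2: "?x'\<^sup>2 + ?y'\<^sup>2 = E / ?p" using CE t p by (simp add: geodesic_constants_def field_simps)
    show ?thesis unfolding e1 e2 sinh_mult_dP[OF d(1)] using p by (simp add: q_def field_simps)
  qed
  finally have "(V has_real_derivative \<kappa> * (- ?ch * q / (4 * ?p)) / C) (at t)"
    unfolding V_def mult.assoc[of \<kappa>] by (intro DERIV_cdivide DERIV_cmult)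
  moreover have "\<kappa> * (- ?ch * q / (4 * ?p)) / C = - ?ch * (\<kappa>\<^sup>2 * q) / (4 * ?p * C * \<kappa>)"
    using \<kappa>(1) by (simp add: field_simps power2_eq_square)
  moreover have "\<dots> = - U t * (?x' / \<kappa>)"
    unfolding \<kappa>(2)[folded q_def] CE'(2) using C p \<kappa>(1) by (simp add: U_def field_simps power2_eq_square)
  ultimately show "(V has_real_derivative - U t * (?x' / \<kappa>)) (at t)" by simp
  have "(V t)\<^sup>2 = \<kappa>\<^sup>2 * ?sh\<^sup>2 * (?p * ?y')\<^sup>2 / C\<^sup>2"
    by (simp add: V_def power_mult_distrib power_divide mult.assoc)
  also have "\<dots> = (E * (4 * ?sh\<^sup>2 * ?p) - 4 * C\<^sup>2 * ?sh\<^sup>2) / q"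
    unfolding CE'(3) \<kappa>2 using q C by (simp add: field_simps)
  also have "\<dots> = 3 * \<kappa>\<^sup>2 - 3 - ?sh\<^sup>2"
    unfolding sinh_sq_mult_P[OF d(1)] \<kappa>2 using q by (simp add: q_def field_simps)
  finally show "(U t)\<^sup>2 + (V t)\<^sup>2 = 3 * \<kappa>\<^sup>2 - 2"
    using cosh_square_eq[of "y t"] by (simp add: U_def)
qed

lemma geodesic_turning_height:
  assumes g: "geodesic_on I x y" and CE: "geodesic_constants I x y C E"
    and C: "C \<noteq> 0" and Q: "E < 4 * C\<^sup>2" and a: "a > 0" "sinh a ^ 2 = 3 * E / (4 * C\<^sup>2 - E)"
  obtains c where "\<And>t. t \<in> I \<Longrightarrow> \<bar>(x t - c) / scale_ii a\<bar> < angle_ii a"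
    "\<And>t. t \<in> I \<Longrightarrow> y t = height_ii a ((x t - c) / scale_ii a)"
proof -
  define \<kappa> where "\<kappa> = scale_ii a"
  have \<kappa>: "\<kappa> > 0" "3 * \<kappa>\<^sup>2 - 2 = cosh a ^ 2" using scale_ii_pos scale_ii_sq[of a] by (simp_all add: \<kappa>_def)
  have \<kappa>q: "\<kappa>\<^sup>2 * (4 * C\<^sup>2 - E) = 4 * C\<^sup>2"
    using scale_ii_sq[of a] a(2) Q cosh_square_eq[of a] by (simp add: \<kappa>_def field_simps)
  define U where "U t = cosh (y t)" for t
  define V where "V t = \<kappa> * sinh (y t) * P (y t) * deriv y t / C" for t
  note UV = geodesic_turning_coordinates[OF g CE C \<kappa>(1) \<kappa>q, folded U_def V_def]
  have U_gt: "U t > 1" if "t \<in> I" for t using one_less_cosh geodesic_onD(1)[OF g that] by (simp add: U_def)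
  obtain t0 where t0: "t0 \<in> I" using geodesic_on_interval(4)[OF g] by blast
  obtain \<theta>0 where \<theta>0: "\<bar>\<theta>0\<bar> < angle_ii a" "cosh a * cos \<theta>0 = U t0" "- cosh a * sin \<theta>0 = V t0"
    using exists_angle_ii[OF a(1) U_gt[OF t0]] UV(3)[OF t0] \<kappa>(2) by metis
  define c where "c = x t0 - \<kappa> * \<theta>0"
  define \<phi> where "\<phi> t = (x t - c) / \<kappa>" for t
  have \<phi>: "(\<phi> has_real_derivative deriv x t / \<kappa>) (at t)" if "t \<in> I" for t
    unfolding \<phi>_def[abs_def] using geodesic_onD(2)[OF g that] \<kappa>(1)
    by (auto intro!: derivative_eq_intros simp: divide_simps)
  have \<phi>0: "\<phi> t0 = \<theta>0" using \<kappa>(1) by (simp add: \<phi>_def c_def)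
  have polar: "U t = cosh a * cos (\<phi> t) \<and> V t = - cosh a * sin (\<phi> t)" if "t \<in> I" for t
    using polar_form_unique[OF geodesic_on_interval(2)[OF g] t0 that \<phi> UV(1,2)] \<theta>0(2,3) \<phi>0 by auto
  have range: "\<bar>\<phi> t\<bar> < angle_ii a" if t: "t \<in> I" for t
  proof (rule continuous_on_connected_abs_less[OF geodesic_on_interval(3)[OF g] _ t0 t])
    show "continuous_on I \<phi>" unfolding \<phi>_def[abs_def]
      using geodesic_on_continuous(1)[OF g] \<kappa>(1) by (intro continuous_intros) auto
    show "\<bar>\<phi> t0\<bar> < angle_ii a" using \<phi>0 \<theta>0(1) by simp
    show "\<bar>\<phi> s\<bar> \<noteq> angle_ii a" if "s \<in> I" for s
    proof
      assume "\<bar>\<phi> s\<bar> = angle_ii a"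
      then have "cos (\<phi> s) = 1 / cosh a" using cos_angle_ii by (metis cos_abs_real)
      then show False using polar[OF that] U_gt[OF that] by simp
    qed
  qed
  show ?thesis
  proof
    show "\<bar>(x t - c) / scale_ii a\<bar> < angle_ii a" if "t \<in> I" for t
      using range[OF that] by (simp add: \<phi>_def \<kappa>_def)
    show "y t = height_ii a ((x t - c) / scale_ii a)" if "t \<in> I" for t
      using polar[OF that] arcosh_cosh_real[of "y t"] geodesic_onD(1)[OF g that]
      by (simp add: height_ii_def U_def \<phi>_def \<kappa>_def)
  qed
qed

lemma curve_ii_eq_image:
  assumes a: "a > 0"
  shows "curve_ii a = (\<lambda>\<theta>. (scale_ii a * \<theta>, height_ii a \<theta>)) ` {- angle_ii a<..<angle_ii a}"
proof (intro set_eqI iffI)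
  fix p assume "p \<in> curve_ii a"
  then obtain u v where p: "p = (u, v)" and v: "0 < v" "v \<le> a"
    and u: "u = scale_ii a * arccos (cosh v / cosh a) \<or> u = - scale_ii a * arccos (cosh v / cosh a)"
    unfolding curve_ii_def scale_ii_def by auto
  define z where "z = cosh v / cosh a"
  have "cosh v \<le> cosh a" using v a cosh_real_nonneg_le_iff by simp
  then have z: "-1 \<le> z" "z \<le> 1" using one_less_cosh[of v] v by (auto simp: z_def field_simps)
  define \<theta> where "\<theta> = u / scale_ii a"
  have \<theta>: "\<theta> = arccos z \<or> \<theta> = - arccos z" using u scale_ii_pos[of a] by (auto simp: \<theta>_def z_def)
  then have "\<bar>\<theta>\<bar> \<le> pi" "cos \<theta> = z" using z arccos_lbound arccos_ubound by auto
  moreover have "cosh a * z > 1" using one_less_cosh[of v] v by (simp add: z_def)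
  ultimately have "\<bar>\<theta>\<bar> < angle_ii a" using cos_gt_iff_abs_less_angle_ii[OF a] by metis
  moreover have "height_ii a \<theta> = v"
    using \<open>cos \<theta> = z\<close> v by (simp add: height_ii_def z_def arcosh_cosh_real)
  moreover have "p = (scale_ii a * \<theta>, height_ii a \<theta>)"
    using calculation scale_ii_pos[of a] by (simp add: p \<theta>_def)
  ultimately show "p \<in> (\<lambda>\<theta>. (scale_ii a * \<theta>, height_ii a \<theta>)) ` {- angle_ii a<..<angle_ii a}" by force
next
  fix p assume "p \<in> (\<lambda>\<theta>. (scale_ii a * \<theta>, height_ii a \<theta>)) ` {- angle_ii a<..<angle_ii a}"
  then obtain \<theta> where p: "p = (scale_ii a * \<theta>, height_ii a \<theta>)" and "\<theta> \<in> {- angle_ii a<..<angle_ii a}"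
    by blast
  then have \<theta>: "\<bar>\<theta>\<bar> < angle_ii a" by auto
  have "\<bar>\<theta>\<bar> \<le> pi" using \<theta> angle_ii_bounds(2)[OF a] by linarith
  then have "arccos (cosh (height_ii a \<theta>) / cosh a) = \<bar>\<theta>\<bar>"
    using cosh_height_ii[OF a \<theta>] by (simp add: arccos_cos_eq_abs)
  then show "p \<in> curve_ii a"
    using height_ii_pos[OF a \<theta>] height_ii_le[OF a \<theta>] by (auto simp: p curve_ii_def scale_ii_def abs_if)
qed

lemma geodesic_on_curve_ii:
  assumes a: "a > 0" and C: "C \<noteq> 0" and J: "open J" "is_interval J" "J \<noteq> {}"
    and \<theta>: "\<And>t. t \<in> J \<Longrightarrow> \<bar>\<theta> t\<bar> < angle_ii a"
      "\<And>t. t \<in> J \<Longrightarrow> (\<theta> has_real_derivative C / (scale_ii a * P (height_ii a (\<theta> t)))) (at t)"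
  shows "geodesic_on J (\<lambda>t. c + scale_ii a * \<theta> t) (\<lambda>t. height_ii a (\<theta> t))"
proof (rule geodesic_on_reparametrization[OF J, where D = "{s. \<bar>s\<bar> < angle_ii a}" and C = C
      and w = "\<lambda>s. C / (scale_ii a * P (height_ii a s))" and X' = "\<lambda>_. scale_ii a" and Y' = "slope_ii a"
      and V = "\<lambda>s. C * dP (height_ii a s) * (scale_ii a ^ 2 - (slope_ii a s)\<^sup>2)
                  / (2 * scale_ii a * P (height_ii a s) ^ 2)"])
  show "\<theta> t \<in> {s. \<bar>s\<bar> < angle_ii a}" "(\<theta> has_real_derivative C / (scale_ii a * P (height_ii a (\<theta> t)))) (at t)"
    if "t \<in> J" for t using \<theta> that by auto
  fix s assume "s \<in> {s. \<bar>s\<bar> < angle_ii a}"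
  then have s: "\<bar>s\<bar> < angle_ii a" by simp
  let ?h = "height_ii a s" and ?Z = "slope_ii a s" and ?\<kappa> = "scale_ii a"
  have h: "?h > 0" using height_ii_pos[OF a s] .
  have p: "P ?h > 0" using P_pos[OF h] .
  have \<kappa>: "?\<kappa> > 0" by (rule scale_ii_pos)
  show "?h > 0" using h .
  show "(height_ii a has_real_derivative ?Z) (at s)" using has_real_derivative_height_ii[OF a s] .
  show "((\<lambda>s. c + ?\<kappa> * s) has_real_derivative ?\<kappa>) (at s)" by (auto intro!: derivative_eq_intros)
  show "?\<kappa> * (C / (?\<kappa> * P ?h)) = C / P ?h" using \<kappa> by simp
  show "(C, ?Z * (C / (?\<kappa> * P ?h))) \<noteq> (0, 0)" using C by simp
  have "((\<lambda>s. ?\<kappa> * P (height_ii a s)) has_real_derivative ?\<kappa> * (dP ?h * ?Z)) (at s)"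
    by (intro DERIV_cmult DERIV_chain2[OF has_real_derivative_P[OF h] has_real_derivative_height_ii[OF a s]])
  from DERIV_mult[OF has_real_derivative_slope_ii[OF a s] DERIV_divide[OF DERIV_const this]]
  have "((\<lambda>s. slope_ii a s * (C / (?\<kappa> * P (height_ii a s)))) has_real_derivative
      dP ?h * (?\<kappa> ^ 2 + ?Z\<^sup>2) / (2 * P ?h) * (C / (?\<kappa> * P ?h))
        + (0 * (?\<kappa> * P ?h) - C * (?\<kappa> * (dP ?h * ?Z))) / (?\<kappa> * P ?h * (?\<kappa> * P ?h)) * ?Z) (at s)"
    using p \<kappa> by simp
  moreover have "dP ?h * (?\<kappa> ^ 2 + ?Z\<^sup>2) / (2 * P ?h) * (C / (?\<kappa> * P ?h))
        + (0 * (?\<kappa> * P ?h) - C * (?\<kappa> * (dP ?h * ?Z))) / (?\<kappa> * P ?h * (?\<kappa> * P ?h)) * ?Z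
      = C * dP ?h * (?\<kappa> ^ 2 - ?Z\<^sup>2) / (2 * ?\<kappa> * P ?h ^ 2)"
    using p \<kappa> by (simp add: field_simps power2_eq_square)
  ultimately show "((\<lambda>s. slope_ii a s * (C / (?\<kappa> * P (height_ii a s)))) has_real_derivative
      C * dP ?h * (?\<kappa> ^ 2 - ?Z\<^sup>2) / (2 * ?\<kappa> * P ?h ^ 2)) (at s)" by simp
  show "C * dP ?h * (?\<kappa> ^ 2 - ?Z\<^sup>2) / (2 * ?\<kappa> * P ?h ^ 2) * (C / (?\<kappa> * P ?h))
      = dP ?h / (2 * P ?h) * ((C / P ?h)\<^sup>2 - (?Z * (C / (?\<kappa> * P ?h)))\<^sup>2)"
    using p \<kappa> by (simp add: field_simps power2_eq_square)
qed

lemma maximal_geodesic_trace_curve_ii: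
  assumes mg: "maximal_geodesic I x y" and CE: "geodesic_constants I x y C E" and C: "C \<noteq> 0"
    and a: "a > 0" and range: "\<And>t. t \<in> I \<Longrightarrow> \<bar>(x t - c) / scale_ii a\<bar> < angle_ii a"
    and height: "\<And>t. t \<in> I \<Longrightarrow> y t = height_ii a ((x t - c) / scale_ii a)"
  shows "geo_trace I x y = hmove 1 c ` curve_ii a"
proof -
  have g: "geodesic_on I x y" using mg unfolding maximal_geodesic_def by blast
  define \<kappa> where "\<kappa> = scale_ii a"
  have \<kappa>: "\<kappa> > 0" using scale_ii_pos by (simp add: \<kappa>_def)
  define D where "D = {- angle_ii a<..<angle_ii a}"
  have D: "s \<in> D \<longleftrightarrow> \<bar>s\<bar> < angle_ii a" for s by (auto simp: D_def)
  define w where "w s = C / (\<kappa> * P (height_ii a s))" for s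
  have "geo_trace I x y = (\<lambda>s. (c + \<kappa> * s, height_ii a s)) ` D"
  proof (rule maximal_geodesic_trace_eq[OF mg, where \<theta> = "\<lambda>t. (x t - c) / \<kappa>" and w = w])
    show "open D" "is_interval D" by (auto simp: D_def is_interval_1)
    have h: "height_ii a s > 0" "isCont (height_ii a) s" if "s \<in> D" for s
      using height_ii_pos[OF a] DERIV_isCont[OF has_real_derivative_height_ii[OF a]] that by (auto simp: D)
    then have "continuous_on D (\<lambda>s. P (height_ii a s))"
      by (intro continuous_on_compose2[OF continuous_on_P] continuous_at_imp_continuous_on) auto
    moreover have nz: "\<kappa> * P (height_ii a s) \<noteq> 0" if "s \<in> D" for s using P_pos[OF h(1)[OF that]] \<kappa> by simp
    ultimately show "continuous_on D w" unfolding w_def by (intro continuous_intros) auto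
    show "0 \<notin> w ` D" using nz C by (auto simp: w_def)
    fix t assume t: "t \<in> I"
    show "(x t - c) / \<kappa> \<in> D" using range[OF t] by (simp add: D \<kappa>_def)
    show "x t = c + \<kappa> * ((x t - c) / \<kappa>) \<and> y t = height_ii a ((x t - c) / \<kappa>)"
      using height[OF t] \<kappa> by (simp add: \<kappa>_def)
    have "((\<lambda>t. (x t - c) / \<kappa>) has_real_derivative deriv x t / \<kappa>) (at t)"
      using geodesic_onD(2)[OF g t] \<kappa> by (auto intro!: derivative_eq_intros)
    then show "((\<lambda>t. (x t - c) / \<kappa>) has_real_derivative w ((x t - c) / \<kappa>)) (at t)"
      using geodesic_constantsD(2)[OF g CE t] height[OF t] by (simp add: w_def \<kappa>_def mult.commute)
  next
    fix J \<theta> assume "open J" "is_interval J" "J \<noteq> {}"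
      and "\<And>t. t \<in> J \<Longrightarrow> \<theta> t \<in> D" "\<And>t. t \<in> J \<Longrightarrow> (\<theta> has_real_derivative w (\<theta> t)) (at t)"
    then show "geodesic_on J (\<lambda>t. c + \<kappa> * \<theta> t) (\<lambda>t. height_ii a (\<theta> t))"
      unfolding \<kappa>_def w_def using geodesic_on_curve_ii[OF a C] by (simp add: D)
  qed
  also have "\<dots> = hmove 1 c ` curve_ii a"
    unfolding curve_ii_eq_image[OF a] image_image by (simp add: hmove_def D_def \<kappa>_def add.commute)
  finally show ?thesis .
qed

lemma maximal_geodesic_turning:
  assumes mg: "maximal_geodesic I x y" and CE: "geodesic_constants I x y C E"
    and C: "C \<noteq> 0" and Q: "E < 4 * C\<^sup>2"
  obtains a c t1 where "a > 0" "geo_trace I x y = hmove 1 c ` curve_ii a" "t1 \<in> I" "deriv y t1 = 0"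
proof -
  have g: "geodesic_on I x y" using mg unfolding maximal_geodesic_def by blast
  obtain t0 where t0: "t0 \<in> I" using geodesic_on_interval(4)[OF g] by blast
  define a where "a = arsinh (sqrt (3 * E / (4 * C\<^sup>2 - E)))"
  have "E > 0" using geodesic_constantsD(1)[OF g CE t0] .
  then have a: "a > 0" "sinh a ^ 2 = 3 * E / (4 * C\<^sup>2 - E)" using Q by (simp_all add: a_def)
  obtain c where range: "\<And>t. t \<in> I \<Longrightarrow> \<bar>(x t - c) / scale_ii a\<bar> < angle_ii a"
    and height: "\<And>t. t \<in> I \<Longrightarrow> y t = height_ii a ((x t - c) / scale_ii a)"
    using geodesic_turning_height[OF g CE C Q a] by blast
  have trace: "geo_trace I x y = hmove 1 c ` curve_ii a"
    using maximal_geodesic_trace_curve_ii[OF mg CE C a(1) range height] .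
  have "(0, a) \<in> curve_ii a" using a(1) by (simp add: curve_ii_def)
  then have "(c, a) \<in> geo_trace I x y" unfolding trace by (force simp: hmove_def)
  then obtain t1 where t1: "t1 \<in> I" "y t1 = a" by (auto simp: geo_trace_def)
  have "deriv y t1 = 0"
    using deriv_zero_at_max[OF geodesic_on_interval(1)[OF g] t1(1) geodesic_onD(3)[OF g t1(1)]]
      height height_ii_le[OF a(1)] range t1(2) by metis
  with a(1) trace t1(1) show ?thesis using that by blast
qed

lemma small_slope_turning:
  assumes g: "geodesic_on I x y" and CE: "geodesic_constants I x y C E"
    and t0: "t0 \<in> I" "y t0 = a" "a > 0" "deriv x t0 \<noteq> 0" "deriv y t0 = m * deriv x t0"
    and m: "0 \<le> m" "m < sqrt 3 / sinh a"
  shows "C \<noteq> 0" "E < 4 * C\<^sup>2"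
proof -
  have p: "P a > 0" using P_pos[OF t0(3)] .
  have C: "C = P a * deriv x t0" and E: "E = P a * (deriv x t0)\<^sup>2 * (1 + m\<^sup>2)"
    using CE t0 by (auto simp: geodesic_constants_def algebra_simps)
  show "C \<noteq> 0" using C p t0(4) by simp
  have sh: "sinh a > 0" using t0(3) by simp
  have "m\<^sup>2 < (sqrt 3 / sinh a)\<^sup>2" using m by (simp add: power_strict_mono)
  then have "1 + m\<^sup>2 < 4 * P a" using sh t0(3) by (simp add: P_sinh field_simps)
  then have "P a * (deriv x t0)\<^sup>2 * (1 + m\<^sup>2) < P a * (deriv x t0)\<^sup>2 * (4 * P a)"
    using p t0(4) by (intro mult_strict_left_mono) simp_all
  then show "E < 4 * C\<^sup>2" by (simp add: C E power2_eq_square algebra_simps)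
qed

section \<open>Classification\<close>

lemma maximal_geodesic_classification:
  assumes mg: "maximal_geodesic I x y"
  obtains e c a where "e \<in> {1, -1}" "a > 0"
    "geo_trace I x y = hmove e c ` curve_i \<or> geo_trace I x y = hmove e c ` curve_ii a \<or>
     geo_trace I x y = hmove e c ` curve_iii a \<or>
     (\<exists>m. m > sqrt 3 / sinh a \<and> geo_trace I x y = hmove e c ` curve_iv a m)"
proof -
  have g: "geodesic_on I x y" using mg unfolding maximal_geodesic_def by blast
  obtain C E where CE: "geodesic_constants I x y C E" using geodesic_constants_exist[OF g] .
  consider "C = 0" | "C \<noteq> 0" "4 * C\<^sup>2 = E" | "C \<noteq> 0" "4 * C\<^sup>2 < E" | "C \<noteq> 0" "E < 4 * C\<^sup>2"
    by linarith
  then show ?thesis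
  proof cases
    case 1
    obtain c where "geo_trace I x y = hmove 1 c ` curve_i"
      by (rule maximal_geodesic_vertical[OF mg CE[unfolded 1]])
    then show ?thesis using that[of 1 1 c] by simp
  next
    case 2
    obtain e c where "e \<in> {1, -1}" "geo_trace I x y = hmove e c ` curve_iii 1"
      by (rule maximal_geodesic_critical[OF mg CE 2(2)])
    then show ?thesis using that[of e 1 c] by simp
  next
    case 3
    obtain e c m where "e \<in> {1, -1}" "m > sqrt 3 / sinh 1" "geo_trace I x y = hmove e c ` curve_iv 1 m"
      by (rule maximal_geodesic_escaping[OF mg CE 3])
    then show ?thesis using that[of e 1 c] by auto
  next
    case 4
    obtain a c t1 where "a > 0" "geo_trace I x y = hmove 1 c ` curve_ii a" "t1 \<in> I" "deriv y t1 = 0"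
      by (rule maximal_geodesic_turning[OF mg CE 4])
    then show ?thesis using that[of 1 a c] by simp
  qed
qed

lemma maximal_geodesic_small_slope:
  assumes mg: "maximal_geodesic I x y"
    and slope: "t0 \<in> I" "y t0 = a" "a > 0" "deriv x t0 \<noteq> 0" "deriv y t0 = m * deriv x t0"
      "0 \<le> m" "m < sqrt 3 / sinh a"
  obtains b c t1 where "b > 0" "geo_trace I x y = hmove 1 c ` curve_ii b" "t1 \<in> I" "deriv y t1 = 0"
proof -
  have g: "geodesic_on I x y" using mg unfolding maximal_geodesic_def by blast
  obtain C E where CE: "geodesic_constants I x y C E" using geodesic_constants_exist[OF g] .
  show ?thesis using maximal_geodesic_turning[OF mg CE small_slope_turning[OF g CE slope]] that .
qed

theorem proposition3p2:
  shows "(\<forall>I x y. maximal_geodesic I x y \<longrightarrow>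
            (\<exists>e c a. e \<in> {1, -1} \<and> a > 0 \<and>
               (geo_trace I x y = hmove e c ` curve_i \<or>
                geo_trace I x y = hmove e c ` curve_ii a \<or>
                geo_trace I x y = hmove e c ` curve_iii a \<or>
                (\<exists>m. m > sqrt 3 / sinh a \<and> geo_trace I x y = hmove e c ` curve_iv a m))))
       \<and> (\<forall>I x y t0 a m. maximal_geodesic I x y \<and> t0 \<in> I \<and> a > 0 \<and>
            x t0 = 0 \<and> y t0 = a \<and> deriv x t0 \<noteq> 0 \<and> deriv y t0 = m * deriv x t0 \<and>
            0 \<le> m \<and> m < sqrt 3 / sinh a \<longrightarrow>
            (\<exists>t1\<in>I. deriv y t1 = 0) \<and>
            (\<exists>c b. b > 0 \<and> geo_trace I x y = hmove 1 c ` curve_ii b))"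
proof (rule conjI, goal_cases)
  case 1
  show ?case by (metis maximal_geodesic_classification)
next
  case 2
  show ?case by (metis maximal_geodesic_small_slope)
qed

end
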